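(* Assume (A2), (A3) and that $V$ is irreducible. Let $n_0\in\mathcal N$ satisfy $\rho(B^{(n_0)})=\max_{n\in\mathcal N}\rho(B^{(n)})$. Then $$\psi(\rho(B^{(n_0)}))=\sup_{w\in\Pi_K^+}\inf_{p\in\mathcal P_+}G(w,p)=\inf_{p\in\mathcal P_+}\sup_{w\in\Pi_K^+}G(w,p).$$ Moreover, $(w^*,p^* )\in\Pi_K^+\times\mathcal P_+$ is a saddle point of $G$ if and only if $p^*=\bar p$ and $w^*\in\mathcal W$, where $\mathcal W=\{\sum_{n\in\mathcal N_0(\bar p)}c_nw^{(n)}: c_n\ge0,\ \sum_{n\in\mathcal N_0(\bar p)}c_n=1\}$ and, for each $n$, $w^{(n)}=y^{(n)}\circ x^{(n)}\in\Pi_K^+$ with $x^{(n)},y^{(n)}$ positive vectors satisfying $B^{(n)}x^{(n)}=\rho(B^{(n)})x^{(n)}$, $(B^{(n)})^Ty^{(n)}=\rho(B^{(n)})y^{(n)}$, $(y^{(n)})^Tx^{(n)}=1$.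
   Context: Network model: $K\ge 2$ links, $\mathcal K=\{1,\dots,K\}$. Power constraint set $\mathcal P=\{p\in\mathbb R_+^K: Cp\le\hat p\}$, where $C\in\{0,1\}^{N\times K}$ has at least one entry equal to $1$ in each column and $\hat p=(P_1,\dots,P_N)\in\mathbb R_{++}^N$; $\mathcal P_+=\mathcal P\cap\mathbb R_{++}^K$; $\mathcal N=\{1,\dots,N\}$; $c_n$ is the $n$-th row of $C$ as a column vector and $g_n(p)=c_n^Tp/P_n$. Gain matrix $V\in\mathbb R_+^{K\times K}$ with zero diagonal, noise vector $z\in\mathbb R_{++}^K$, $\mathrm{SIR}_k(p)=p_k/((Vp)_k+z_k)$. SIR targets $\gamma_k>0$, $\Gamma=\mathrm{diag}(\gamma_1,\dots,\gamma_K)$. $B^{(n)}=\Gamma V+\frac1{P_n}\Gamma z c_n^T$. $\mathcal N_0(p)=\{n\in\mathcal N: g_n(p)=\max_{m\in\mathcal N}g_m(p)=1\}$. $\bar p$ denotes the unique maximizer of $p\mapsto\min_k\mathrm{SIR}_k(p)/\gamma_k$ over $\mathcal P$. Assumption (A2): $\phi:\mathbb R_{++}\to\mathbb R$ is continuously differentiable and strictly increasing; $\mathcal Q=\phi(\mathbb R_{++})$. Assumption (A3): $\phi^{-1}:\mathcal Q\to\mathbb R_{++}$ is log-convex. $\psi(x)=-\phi(1/x)$ for $x>0$. $\Pi_K=\{x\in\mathbb R_+^K:\|x\|_1=1\}$, $\Pi_K^+=\Pi_K\cap\mathbb R_{++}^K$. $G:\Pi_K^+\times\mathcal P_+\to\mathbb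 R$, $G(w,p)=\sum_{k\in\mathcal K}w_k\psi(\gamma_k/\mathrm{SIR}_k(p))$. $\circ$ denotes the entrywise product; $\rho(\cdot)$ the spectral radius. *)

theory Defs
  imports "HOL-Analysis.Analysis" "HOL-Library.Extended_Real"
begin

definition cmatrix :: "real^'k^'k \<Rightarrow> complex^'k^'k" where
  "cmatrix A = (\<chi> i j. complex_of_real (A$i$j))"

definition eigenvalues_c :: "real^'k^'k \<Rightarrow> complex set" where
  "eigenvalues_c A = {l. \<exists>v::complex^'k. v \<noteq> 0 \<and> cmatrix A *v v = l *s v}"

definition spectral_radius :: "real^'k^'k \<Rightarrow> real" where
  "spectral_radius A = Max (cmod ` eigenvalues_c A)"

definition irreducible_mat :: "real^'k^'k \<Rightarrow> bool" where
  "irreducible_mat A \<longleftrightarrow> (\<forall>i j. (i, j) \<in> {(a, b). A$a$b > 0}\<^sup>+)"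

definition SIR :: "real^'k^'k \<Rightarrow> real^'k \<Rightarrow> real^'k \<Rightarrow> 'k \<Rightarrow> real" where
  "SIR V z p k = p$k / ((V *v p)$k + z$k)"

definition power_set_P :: "real^'k^'n \<Rightarrow> real^'n \<Rightarrow> (real^'k) set" where
  "power_set_P C phat = {p. (\<forall>k. 0 \<le> p$k) \<and> (\<forall>n. (C *v p)$n \<le> phat$n)}"

definition power_set_Pplus :: "real^'k^'n \<Rightarrow> real^'n \<Rightarrow> (real^'k) set" where
  "power_set_Pplus C phat = power_set_P C phat \<inter> {p. \<forall>k. 0 < p$k}"

definition simplex_plus :: "(real^'k) set" where
  "simplex_plus = {w. (\<forall>k. 0 < w$k) \<and> sum (\<lambda>k. w$k) UNIV = 1}"

definition gfun :: "real^'k^'n \<Rightarrow> real^'n \<Rightarrow> 'n \<Rightarrow> real^'k \<Rightarrow> real" where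
  "gfun C phat n p = (C$n \<bullet> p) / phat$n"

definition N0 :: "real^'k^'n \<Rightarrow> real^'n \<Rightarrow> real^'k \<Rightarrow> 'n set" where
  "N0 C phat p = {n. gfun C phat n p = Max (range (\<lambda>m. gfun C phat m p))
                     \<and> Max (range (\<lambda>m. gfun C phat m p)) = 1}"

definition Bmat :: "real^'k \<Rightarrow> real^'k^'k \<Rightarrow> real^'k \<Rightarrow> real^'k^'n \<Rightarrow> real^'n \<Rightarrow> 'n \<Rightarrow> real^'k^'k" where
  "Bmat gamma V z C phat n =
     (\<chi> i j. gamma$i * V$i$j + gamma$i * z$i * C$n$j / phat$n)"

definition psi :: "(real \<Rightarrow> real) \<Rightarrow> real \<Rightarrow> real" where
  "psi \<phi> x = - \<phi> (1 / x)"

definition Gfun :: "(real \<Rightarrow> real) \<Rightarrow> real^'k \<Rightarrow> real^'k^'k \<Rightarrow> real^'k \<Rightarrow> real^'k \<Rightarrow> real^'k \<Rightarrow> real" where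
  "Gfun \<phi> gamma V z w p = (\<Sum>k\<in>UNIV. w$k * psi \<phi> (gamma$k / SIR V z p k))"

definition perron_weight :: "real^'k^'k \<Rightarrow> real^'k" where
  "perron_weight B = (THE w. \<exists>x y. (\<forall>k. 0 < x$k) \<and> (\<forall>k. 0 < y$k)
       \<and> B *v x = spectral_radius B *s x
       \<and> transpose B *v y = spectral_radius B *s y
       \<and> y \<bullet> x = 1
       \<and> w = (\<chi> k. y$k * x$k))"

definition saddle_point :: "('a \<Rightarrow> 'b \<Rightarrow> real) \<Rightarrow> 'a set \<Rightarrow> 'b set \<Rightarrow> 'a \<Rightarrow> 'b \<Rightarrow> bool" where
  "saddle_point G W P w0 p0 \<longleftrightarrow> w0 \<in> W \<and> p0 \<in> P \<and>
     (\<forall>w\<in>W. \<forall>p\<in>P. G w p0 \<le> G w0 p0 \<and> G w0 p0 \<le> G w0 p)"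

end

theory Submission
  imports Defs
begin

(*
  Let rho_max = max_n rho(B^(n)) and let pbar be the max-min SIR optimum.  Every link
  then has normalised SIR exactly 1/rho_max at pbar, so G(w, pbar) = psi(rho_max) for all w;
  and for each tight constraint n, pbar is the Perron vector of B^(n), so that the
  Friedland-Karlin inequality together with Jensen's inequality for psi (assumption (A3))
  gives G(w^(n), p) >= psi(rho_max) for all p.  These two facts yield both min-max values and
  the sufficiency of the saddle-point condition.  For necessity, p = pbar follows by testing
  the saddle inequality against weights near the vertices of the simplex, and w in W follows
  from the first-order optimality condition at pbar, Farkas' lemma and invertibility of the
  dual operator rho_max I - (Gamma V)^T.
*)

section \<open>Perron--Frobenius theory for irreducible nonnegative matrices\<close>

lemma mv_nth: "(A *v x)$i = (\<Sum>j\<in>UNIV. A$i$j * x$j)"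
  by (simp add: matrix_vector_mult_def)

lemma tmv_nth: "(transpose A *v x)$i = (\<Sum>j\<in>UNIV. A$j$i * x$j)"
  by (simp add: matrix_vector_mult_def transpose_def)

lemma inner_real_vec: "(x::real^'k) \<bullet> y = (\<Sum>i\<in>UNIV. x$i * y$i)"
  by (simp add: inner_vec_def)

text \<open>Eigenvectors for pairwise distinct eigenvalues are linearly independent;
  hence a square matrix has at most as many eigenvalues as its dimension.\<close>

lemma eigenvectors_independent:
  fixes M :: "complex^'k^'k" and ev :: "complex \<Rightarrow> complex^'k"
  assumes "finite L" "\<forall>l\<in>L. ev l \<noteq> 0 \<and> M *v ev l = l *s ev l"
  shows "vec.independent (ev ` L) \<and> inj_on ev L"
  using assms
proof (induction L rule: finite_induct)
  case empty
  then show ?case by (simp add: vec.independent_empty)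
next
  case (insert m L)
  have IH: "vec.independent (ev ` L)" "inj_on ev L" using insert by auto
  have evm: "ev m \<noteq> 0" "M *v ev m = m *s ev m" using insert.prems by auto
  have notin: "ev m \<notin> vec.span (ev ` L)"
  proof
    assume "ev m \<in> vec.span (ev ` L)"
    then obtain u where u: "ev m = (\<Sum>v\<in>ev ` L. u v *s v)"
      using vec.span_finite[of "ev ` L"] insert.hyps(1) by auto
    have u2: "ev m = (\<Sum>l\<in>L. u (ev l) *s ev l)"
      using u IH(2) by (simp add: sum.reindex)
    have "M *v ev m = (\<Sum>l\<in>L. u (ev l) *s (M *v ev l))"
      by (simp add: u2 vec.sum vec.scale)
    also have "\<dots> = (\<Sum>l\<in>L. (u (ev l) * l) *s ev l)"
      using insert.prems by (intro sum.cong) auto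
    finally have e1: "m *s ev m = (\<Sum>l\<in>L. (u (ev l) * l) *s ev l)" using evm by simp
    have e2: "m *s ev m = (\<Sum>l\<in>L. (u (ev l) * m) *s ev l)"
      by (simp add: u2 vec.scale_sum_right mult.commute)
    have "(\<Sum>l\<in>L. (u (ev l) * (l - m)) *s ev l) = 0"
      using e1 e2 by (simp add: algebra_simps sum_subtractf vector_sub_rdistrib)
    hence "(\<Sum>v\<in>ev ` L. (u v * (inv_into L ev v - m)) *s v) = 0"
      using IH(2) by (simp add: sum.reindex)
    moreover have "\<forall>c. (\<Sum>v\<in>ev ` L. c v *s v) = 0 \<longrightarrow> (\<forall>v\<in>ev ` L. c v = 0)"
      using IH(1) unfolding vec.independent_explicit by blast
    ultimately have "\<forall>v\<in>ev ` L. u v * (inv_into L ev v - m) = 0"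
      using spec[of _ "\<lambda>v. u v * (inv_into L ev v - m)"] by blast
    hence "\<forall>l\<in>L. u (ev l) = 0" using IH(2) insert.hyps(2)
      by (auto simp: inv_into_f_f)
    hence "ev m = 0" using u2 by simp
    thus False using evm by simp
  qed
  have "ev m \<notin> ev ` L" using notin vec.span_base by blast
  then show ?case using notin IH vec.independent_insertI by auto
qed

lemma finite_eigenvalues:
  fixes M :: "complex^'k^'k"
  shows "finite {l. \<exists>v. v \<noteq> 0 \<and> M *v v = l *s v}"
proof (rule ccontr)
  let ?E = "{l. \<exists>v. v \<noteq> 0 \<and> M *v v = l *s v}"
  assume "infinite ?E"
  then obtain L where L: "L \<subseteq> ?E" "finite L" "card L = CARD('k) + 1"
    using infinite_arbitrarily_large by blast
  define ev where "ev l = (SOME v. v \<noteq> 0 \<and> M *v v = l *s v)" for l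
  have "\<forall>l\<in>L. ev l \<noteq> 0 \<and> M *v ev l = l *s ev l"
  proof
    fix l assume "l \<in> L"
    hence "\<exists>v. v \<noteq> 0 \<and> M *v v = l *s v" using L(1) by auto
    from someI_ex[OF this] show "ev l \<noteq> 0 \<and> M *v ev l = l *s ev l" unfolding ev_def .
  qed
  from eigenvectors_independent[OF L(2) this]
  have "vec.independent (ev ` L)" "inj_on ev L" by auto
  hence "card (ev ` L) \<le> vec.dim (ev ` L)" using vec.independent_bound_general by blast
  also have "\<dots> \<le> vec.dim (UNIV :: (complex^'k) set)" by (rule vec.dim_subset) simp
  also have "\<dots> = CARD('k)" by (simp add: vec.dim_UNIV card_cart_basis)
  finally show False using \<open>inj_on ev L\<close> L(3) by (simp add: card_image)
qed

text \<open>If a nonnegative matrix has a positive eigenvector for the eigenvalue \<open>r\<close>,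
  every complex eigenvalue has modulus at most \<open>r\<close>: compare an eigenvector \<open>u\<close>
  with \<open>c x\<close> at a coordinate where \<open>|u\<^sub>i| / x\<^sub>i\<close> is maximal.\<close>

lemma eigenvalue_bounded_by_pos_eigvec:
  fixes A :: "real^'k^'k"
  assumes nn: "\<forall>i j. 0 \<le> A$i$j" and xpos: "\<forall>i. 0 < x$i" and ev: "A *v x = r *s x"
    and l: "l \<in> eigenvalues_c A"
  shows "cmod l \<le> r"
proof -
  obtain u where u0: "u \<noteq> 0" and ue: "cmatrix A *v u = l *s u"
    using l unfolding eigenvalues_c_def by blast
  define c where "c = Max (range (\<lambda>i. cmod (u$i) / x$i))"
  have "c \<in> range (\<lambda>i. cmod (u$i) / x$i)" unfolding c_def by (rule Max_in) auto
  then obtain i0 where i0: "c = cmod (u$i0) / x$i0" by auto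
  have cj: "cmod (u$j) \<le> c * x$j" for j
  proof -
    have "cmod (u$j) / x$j \<le> c" unfolding c_def by (rule Max_ge) auto
    thus ?thesis using xpos[rule_format, of j] by (simp add: divide_le_eq)
  qed
  obtain j where j: "u$j \<noteq> 0" using u0 by (metis vec_eq_iff zero_index)
  have "0 < cmod (u$j) / x$j" using j xpos by simp
  also have "\<dots> \<le> c" unfolding c_def by (rule Max_ge) auto
  finally have "0 < c" .
  hence ui0: "0 < cmod (u$i0)" using i0 xpos[rule_format, of i0]
    by (metis divide_eq_0_iff less_eq_real_def norm_ge_zero)
  have "cmod l * cmod (u$i0) = cmod ((cmatrix A *v u)$i0)" using ue by (simp add: norm_mult)
  also have "\<dots> = cmod (\<Sum>j\<in>UNIV. complex_of_real (A$i0$j) * u$j)"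
    by (simp add: cmatrix_def matrix_vector_mult_def)
  also have "\<dots> \<le> (\<Sum>j\<in>UNIV. cmod (complex_of_real (A$i0$j) * u$j))" by (rule norm_sum)
  also have "\<dots> = (\<Sum>j\<in>UNIV. A$i0$j * cmod (u$j))"
    using nn by (intro sum.cong) (auto simp: norm_mult)
  also have "\<dots> \<le> (\<Sum>j\<in>UNIV. A$i0$j * (c * x$j))"
    using nn cj by (intro sum_mono mult_left_mono) auto
  also have "\<dots> = c * (A *v x)$i0"
    by (simp add: mv_nth sum_distrib_left algebra_simps)
  also have "\<dots> = r * cmod (u$i0)" using ev i0 xpos[rule_format, of i0] by simp
  finally show ?thesis using ui0 by simp
qed

lemma spectral_radius_pos_eigvec:
  fixes A :: "real^'k^'k"
  assumes nn: "\<forall>i j. 0 \<le> A$i$j" and xpos: "\<forall>i. 0 < x$i" and ev: "A *v x = r *s x"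
  shows "spectral_radius A = r"
proof -
  obtain i :: 'k where True by simp
  have "0 \<le> (A *v x)$i" using nn xpos
    by (auto simp: mv_nth less_imp_le intro!: sum_nonneg)
  hence r0: "0 \<le> r" using ev xpos[rule_format, of i] by (simp add: zero_le_mult_iff)
  define v :: "complex^'k" where "v = (\<chi> i. complex_of_real (x$i))"
  have "v \<noteq> 0" using xpos by (metis less_irrefl of_real_eq_0_iff v_def vec_lambda_beta zero_index)
  moreover have "cmatrix A *v v = complex_of_real r *s v"
  proof -
    have "(cmatrix A *v v)$i = complex_of_real ((A *v x)$i)" for i
      by (simp add: cmatrix_def v_def matrix_vector_mult_def)
    thus ?thesis using ev by (simp add: vec_eq_iff v_def)
  qed
  ultimately have "complex_of_real r \<in> eigenvalues_c A" unfolding eigenvalues_c_def by blast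
  hence "r \<in> cmod ` eigenvalues_c A" using r0 by (metis image_eqI norm_of_real abs_of_nonneg)
  moreover have "finite (eigenvalues_c A)" unfolding eigenvalues_c_def by (rule finite_eigenvalues)
  ultimately show ?thesis
    unfolding spectral_radius_def
    using eigenvalue_bounded_by_pos_eigvec[OF nn xpos ev] by (intro Max_eqI) auto
qed

text \<open>Basic consequences of irreducibility: a nonnegative vector \<open>q\<close> such that \<open>A q\<close>
  vanishes wherever \<open>q\<close> does is zero as soon as one entry vanishes (zeros propagate
  along the strongly connected graph of \<open>A\<close>); every row and column has a positive
  entry; and the transpose is irreducible.\<close>

lemma irreducible_zero_propagates:
  fixes A :: "real^'k^'k" and q :: "real^'k"
  assumes irr: "irreducible_mat A" and nn: "\<forall>i j. 0 \<le> A$i$j" and q: "\<forall>i. 0 \<le> q$i"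
    and z: "\<forall>i. q$i = 0 \<longrightarrow> (A *v q)$i = 0" and i0: "q$i0 = 0"
  shows "q = 0"
proof -
  have zero_step: "q$b = 0" if "q$a = 0" "0 < A$a$b" for a b
  proof -
    have "(\<Sum>j\<in>UNIV. A$a$j * q$j) = 0" using z that(1) by (simp add: mv_nth)
    hence "\<forall>j\<in>UNIV. A$a$j * q$j = 0"
      by (subst sum_nonneg_eq_0_iff[symmetric]) (use nn q in auto)
    thus ?thesis using that(2) by force
  qed
  have "q$j = 0" if "(i0, j) \<in> {(a, b). A$a$b > 0}\<^sup>+" for j
    using that
  proof (induction rule: trancl_induct)
    case (base y) thus ?case using zero_step i0 by blast
  next
    case (step y w) thus ?case using zero_step by blast
  qed
  thus ?thesis using irr unfolding irreducible_mat_def by (simp add: vec_eq_iff)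
qed

lemma irreducible_col_pos:
  fixes A :: "real^'k^'k"
  assumes "irreducible_mat A"
  shows "\<exists>i. 0 < A$i$j"
proof -
  have "(j, j) \<in> {(a, b). A$a$b > 0}\<^sup>+" using assms unfolding irreducible_mat_def by blast
  thus ?thesis by (rule tranclE) auto
qed

lemma irreducible_row_pos:
  fixes A :: "real^'k^'k"
  assumes "irreducible_mat A"
  shows "\<exists>j. 0 < A$i$j"
proof -
  have "(i, i) \<in> {(a, b). A$a$b > 0}\<^sup>+" using assms unfolding irreducible_mat_def by blast
  thus ?thesis by (rule converse_tranclE) auto
qed

lemma irreducible_transpose:
  fixes A :: "real^'k^'k"
  assumes "irreducible_mat A"
  shows "irreducible_mat (transpose A)"
proof -
  have e: "{(a, b). transpose A$a$b > 0} = {(a, b). A$a$b > 0}\<inverse>"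
    by (auto simp: transpose_def)
  show ?thesis using assms unfolding irreducible_mat_def e trancl_converse by blast
qed

lemma nonneg_transpose:
  fixes A :: "real^'k^'k"
  shows "\<forall>i j. 0 \<le> A$i$j \<Longrightarrow> \<forall>i j. 0 \<le> transpose A$i$j"
  by (simp add: transpose_def)

lemma row_pos_mult_pos:
  fixes A :: "real^'k^'k"
  assumes nn: "\<forall>i j. 0 \<le> A$i$j" and row: "0 < A$i$j" and p: "\<forall>i. 0 < p$i"
  shows "0 < (A *v p)$i"
proof -
  have "0 < A$i$j * p$j" using row p by simp
  also have "\<dots> \<le> (\<Sum>j\<in>UNIV. A$i$j * p$j)"
    by (rule member_le_sum) (use nn p in \<open>auto simp: less_imp_le\<close>)
  finally show ?thesis by (simp add: mv_nth)
qed

lemma irreducible_mult_pos: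
  fixes A :: "real^'k^'k"
  assumes "\<forall>i j. 0 \<le> A$i$j" "irreducible_mat A" "\<forall>i. 0 < p$i"
  shows "0 < (A *v p)$i"
proof -
  obtain j where "0 < A$i$j" using irreducible_row_pos[OF assms(2)] by blast
  thus ?thesis by (rule row_pos_mult_pos[OF assms(1) _ assms(3)])
qed

text \<open>For irreducible nonnegative matrices a positive eigenvector is unique up to scaling,
  even among nonnegative eigenvectors for the same eigenvalue: subtracting the largest
  multiple of \<open>x\<close> that stays below \<open>x'\<close> leaves a nonnegative eigenvector with a zero
  entry, which vanishes.\<close>

lemma nonneg_eigvec_proportional:
  fixes A :: "real^'k^'k"
  assumes nn: "\<forall>i j. 0 \<le> A$i$j" and irr: "irreducible_mat A"
    and x: "\<forall>i. 0 < x$i" "A *v x = r *s x"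
    and x': "\<forall>i. 0 \<le> x'$i" "A *v x' = r *s x'"
  shows "\<exists>c. x' = c *s x"
proof -
  define c where "c = Min (range (\<lambda>i. x'$i / x$i))"
  have "c \<in> range (\<lambda>i. x'$i / x$i)" unfolding c_def by (rule Min_in) auto
  then obtain i0 where i0: "c = x'$i0 / x$i0" by auto
  define q where "q = x' - c *s x"
  have qnn: "\<forall>i. 0 \<le> q$i"
  proof
    fix i
    have "c \<le> x'$i / x$i" unfolding c_def by (rule Min_le) auto
    thus "0 \<le> q$i" using x(1)[rule_format, of i] by (simp add: q_def le_divide_eq mult.commute)
  qed
  have qi0: "q$i0 = 0" using i0 x(1)[rule_format, of i0] by (simp add: q_def)
  have "A *v q = r *s q"
    by (simp add: q_def matrix_vector_mult_diff_distrib x(2) x'(2) vec.scale algebra_simps)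
  hence "q = 0" using irreducible_zero_propagates[OF irr nn qnn _ qi0] by simp
  thus ?thesis by (auto simp: q_def)
qed

text \<open>On the standard simplex the map
  \<open>x \<mapsto> A x / \<Sum>(A x)\<close> is continuous when every column of \<open>A\<close> has a positive entry,
  so Brouwer's fixed point theorem gives a nonnegative eigenvector.\<close>

definition std_simplex :: "(real^'k) set" where
  "std_simplex = {x. (\<forall>i. 0 \<le> x$i) \<and> sum (\<lambda>i. x$i) UNIV = 1}"

lemma std_simplex_compact: "compact (std_simplex :: (real^'k) set)"
proof -
  have "closed (std_simplex :: (real^'k) set)"
    unfolding std_simplex_def
    by (intro closed_Collect_conj closed_Collect_all closed_Collect_le closed_Collect_eq continuous_intros)
  moreover have "std_simplex \<subseteq> cbox 0 (\<chi> i. 1 :: real^'k)"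
  proof
    fix x :: "real^'k" assume x: "x \<in> std_simplex"
    have "x$i \<le> 1" for i
    proof -
      have "x$i \<le> sum (\<lambda>i. x$i) UNIV" by (rule member_le_sum) (use x in \<open>auto simp: std_simplex_def\<close>)
      thus ?thesis using x by (simp add: std_simplex_def)
    qed
    thus "x \<in> cbox 0 (\<chi> i. 1)" using x by (auto simp: mem_box_cart std_simplex_def)
  qed
  ultimately show ?thesis using bounded_cbox bounded_subset compact_eq_bounded_closed by blast
qed

lemma std_simplex_convex: "convex (std_simplex :: (real^'k) set)"
  unfolding convex_def
proof (intro ballI allI impI)
  fix x y :: "real^'k" and u v :: real
  assume x: "x \<in> std_simplex" and y: "y \<in> std_simplex" and uv: "0 \<le> u" "0 \<le> v" "u + v = 1"
  have "sum (\<lambda>i. (u *\<^sub>R x + v *\<^sub>R y)$i) UNIV = u * sum (\<lambda>i. x$i) UNIV + v * sum (\<lambda>i. y$i) UNIV"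
    by (simp add: sum.distrib sum_distrib_left)
  thus "u *\<^sub>R x + v *\<^sub>R y \<in> std_simplex" using x y uv by (simp add: std_simplex_def)
qed

lemma std_simplex_nonempty: "(std_simplex :: (real^'k) set) \<noteq> {}"
proof -
  have "((\<chi> i. 1 / real CARD('k)) :: real^'k) \<in> std_simplex" unfolding std_simplex_def by auto
  thus ?thesis by blast
qed

lemma std_simplex_mult_sum_pos:
  fixes A :: "real^'k^'k"
  assumes nn: "\<forall>i j. 0 \<le> A$i$j" and col: "\<forall>j. \<exists>i. 0 < A$i$j" and x: "x \<in> std_simplex"
  shows "0 < (\<Sum>i\<in>UNIV. (A *v x)$i)"
proof -
  obtain j where j: "0 < x$j"
  proof (rule ccontr)
    assume "\<not> thesis"
    hence "\<forall>j. \<not> 0 < x$j" using that by blast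
    hence "\<forall>j. x$j = 0" using x unfolding std_simplex_def by (simp add: order.antisym not_less)
    thus False using x unfolding std_simplex_def by simp
  qed
  obtain i where "0 < A$i$j" using col by blast
  hence "0 < A$i$j * x$j" using j by simp
  also have "\<dots> \<le> (\<Sum>b\<in>UNIV. A$i$b * x$b)"
    by (rule member_le_sum) (use nn x in \<open>auto simp: std_simplex_def\<close>)
  also have "\<dots> \<le> (\<Sum>i\<in>UNIV. (A *v x)$i)" unfolding mv_nth
    by (rule member_le_sum) (use nn x in \<open>auto simp: std_simplex_def intro!: sum_nonneg\<close>)
  finally show ?thesis .
qed

lemma brouwer_nonneg_eigvec:
  fixes A :: "real^'k^'k"
  assumes nn: "\<forall>i j. 0 \<le> A$i$j" and col: "\<forall>j. \<exists>i. 0 < A$i$j"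
  shows "\<exists>x\<in>std_simplex. \<exists>s. A *v x = s *s x"
proof -
  define s where "s x = sum (\<lambda>i. (A *v x)$i) UNIV" for x :: "real^'k"
  define f where "f x = (1 / s x) *s (A *v x)" for x
  have Ax_nn: "0 \<le> (A *v x)$i" if "x \<in> std_simplex" for x i
    using nn that by (auto simp: std_simplex_def mv_nth intro!: sum_nonneg)
  have spos: "0 < s x" if "x \<in> std_simplex" for x
    unfolding s_def by (rule std_simplex_mult_sum_pos[OF nn col that])
  have "continuous_on std_simplex f"
  proof -
    have lin: "continuous_on std_simplex (\<lambda>x. A *v x)"
      by (rule matrix_vector_mult_linear_continuous_on)
    have cs: "continuous_on std_simplex s" unfolding s_def
      by (intro continuous_intros continuous_on_component lin)
    have "\<forall>x\<in>std_simplex. s x \<noteq> 0"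
    proof
      fix x :: "real^'k" assume "x \<in> std_simplex"
      from spos[OF this] show "s x \<noteq> 0" by simp
    qed
    hence "continuous_on std_simplex (\<lambda>x. (1 / s x) *\<^sub>R (A *v x))"
      by (intro continuous_intros lin cs) blast
    thus ?thesis unfolding f_def scalar_mult_eq_scaleR .
  qed
  moreover have "f \<in> std_simplex \<rightarrow> std_simplex"
  proof
    fix x :: "real^'k" assume x: "x \<in> std_simplex"
    have "\<forall>i. 0 \<le> (A *v x)$i" using Ax_nn[OF x] by blast
    moreover have "sum (\<lambda>i. (f x)$i) UNIV = 1"
      using spos[OF x] by (simp add: f_def sum_divide_distrib[symmetric] s_def)
    ultimately show "f x \<in> std_simplex" using spos[OF x] by (auto simp: std_simplex_def f_def)
  qed
  ultimately obtain x where x: "x \<in> std_simplex" "f x = x"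
    using brouwer[OF std_simplex_compact std_simplex_convex std_simplex_nonempty] by blast
  hence "A *v x = s x *s x"
    using spos[OF x(1)] by (auto simp: f_def vec_eq_iff field_simps)
  thus ?thesis using x(1) by blast
qed

lemma perron_eigvec_exists:
  fixes A :: "real^'k^'k"
  assumes nn: "\<forall>i j. 0 \<le> A$i$j" and irr: "irreducible_mat A"
  shows "\<exists>x. (\<forall>i. 0 < x$i) \<and> A *v x = spectral_radius A *s x"
proof -
  have "\<forall>j. \<exists>i. 0 < A$i$j" using irreducible_col_pos[OF irr] by blast
  then obtain x s where x: "x \<in> std_simplex" and ev: "A *v x = s *s x"
    using brouwer_nonneg_eigvec[OF nn] by blast
  have xnn: "\<forall>i. 0 \<le> x$i" using x by (simp add: std_simplex_def)
  have xpos: "\<forall>i. 0 < x$i"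
  proof (rule ccontr)
    assume "\<not> (\<forall>i. 0 < x$i)"
    then obtain i where "x$i = 0" using xnn by (metis order_le_less)
    hence "x = 0" using irreducible_zero_propagates[OF irr nn xnn, of i] ev by simp
    thus False using x by (simp add: std_simplex_def)
  qed
  thus ?thesis using ev spectral_radius_pos_eigvec[OF nn xpos ev] by auto
qed

lemma left_eigvec_pairing:
  fixes B :: "real^'k^'k"
  assumes "transpose B *v y = r *s y"
  shows "y \<bullet> (B *v p) = r * (y \<bullet> p)"
proof -
  have "y \<bullet> (B *v p) = (\<Sum>i\<in>UNIV. \<Sum>j\<in>UNIV. y$i * (B$i$j * p$j))"
    by (simp add: inner_real_vec mv_nth sum_distrib_left)
  also have "\<dots> = (\<Sum>j\<in>UNIV. (\<Sum>i\<in>UNIV. B$i$j * y$i) * p$j)"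
    by (subst sum.swap) (simp add: sum_distrib_left mult_ac)
  also have "\<dots> = (\<Sum>j\<in>UNIV. (transpose B *v y)$j * p$j)" by (simp only: tmv_nth)
  also have "\<dots> = r * (y \<bullet> p)" using assms by (simp add: inner_real_vec sum_distrib_left algebra_simps)
  finally show ?thesis .
qed

lemma pos_inner_zero:
  fixes y q :: "real^'k"
  assumes "\<forall>i. 0 < y$i" "\<forall>i. 0 \<le> q$i" "y \<bullet> q = 0"
  shows "q = 0"
proof -
  have "\<forall>i. 0 \<le> y$i * q$i" using assms by (metis less_imp_le mult_nonneg_nonneg)
  hence "\<forall>i\<in>UNIV. y$i * q$i = 0"
    using assms by (subst sum_nonneg_eq_0_iff[symmetric]) (auto simp: inner_real_vec)
  thus ?thesis using assms(1) unfolding vec_eq_iff by (metis UNIV_I mult_eq_0_iff order_less_irrefl zero_index)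
qed

lemma pos_inner_pos:
  fixes y q :: "real^'k"
  assumes "\<forall>i. 0 < y$i" "\<forall>i. 0 < q$i"
  shows "0 < y \<bullet> q"
proof -
  have "0 \<le> y \<bullet> q" using assms unfolding inner_real_vec
    by (intro sum_nonneg) (simp add: less_imp_le)
  moreover have "y \<bullet> q \<noteq> 0"
  proof
    assume "y \<bullet> q = 0"
    moreover have "\<forall>i. 0 \<le> q$i" using assms(2) by (simp add: less_imp_le)
    ultimately have "q = 0" using pos_inner_zero[OF assms(1)] by blast
    thus False using assms(2)[rule_format, of undefined] by simp
  qed
  ultimately show ?thesis by simp
qed

lemma perron_left_eigvec_exists:
  fixes A :: "real^'k^'k"
  assumes nn: "\<forall>i j. 0 \<le> A$i$j" and irr: "irreducible_mat A"
    and x: "\<forall>i. 0 < x$i" and ex: "A *v x = r *s x"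
  shows "\<exists>y. (\<forall>i. 0 < y$i) \<and> transpose A *v y = r *s y"
proof -
  obtain y where y: "\<forall>i. 0 < y$i" "transpose A *v y = spectral_radius (transpose A) *s y"
    using perron_eigvec_exists[OF nonneg_transpose[OF nn] irreducible_transpose[OF irr]] by blast
  have "y \<bullet> (A *v x) = spectral_radius (transpose A) * (y \<bullet> x)"
    by (rule left_eigvec_pairing[OF y(2)])
  moreover have "y \<bullet> (A *v x) = r * (y \<bullet> x)" using ex by (simp add: scalar_mult_eq_scaleR)
  ultimately have "spectral_radius (transpose A) = r" using pos_inner_pos[OF y(1) x] by simp
  thus ?thesis using y by auto
qed

lemma left_eigvec_squeeze_ge:
  fixes A :: "real^'k^'k"
  assumes y: "\<forall>i. 0 < y$i" "transpose A *v y = r *s y"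
    and ge: "\<forall>i. r * p$i \<le> (A *v p)$i"
  shows "A *v p = r *s p"
proof -
  define q where "q = A *v p - r *s p"
  have "\<forall>i. 0 \<le> q$i" using ge by (simp add: q_def)
  moreover have "y \<bullet> q = 0"
    using left_eigvec_pairing[OF y(2)] by (simp add: q_def inner_diff_right scalar_mult_eq_scaleR)
  ultimately have "q = 0" using pos_inner_zero[OF y(1)] by blast
  thus ?thesis by (simp add: q_def)
qed

lemma left_eigvec_squeeze_le:
  fixes A :: "real^'k^'k"
  assumes y: "\<forall>i. 0 < y$i" "transpose A *v y = r *s y"
    and le: "\<forall>i. (A *v p)$i \<le> r * p$i"
  shows "A *v p = r *s p"
proof -
  define q where "q = r *s p - A *v p"
  have "\<forall>i. 0 \<le> q$i" using le by (simp add: q_def)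
  moreover have "y \<bullet> q = 0"
    using left_eigvec_pairing[OF y(2)] by (simp add: q_def inner_diff_right scalar_mult_eq_scaleR)
  ultimately have "q = 0" using pos_inner_zero[OF y(1)] by blast
  thus ?thesis by (simp add: q_def)
qed

text \<open>A nonnegative matrix that is strictly subinvariant at a positive vector,
  \<open>A x < r x\<close>, has no nonzero left eigenvector for \<open>r\<close>: from \<open>A\<^sup>T q = r q\<close> one gets
  \<open>r |q| \<le> A\<^sup>T |q|\<close>, and pairing with \<open>x\<close> leaves \<open>\<Sum>\<^sub>i |q\<^sub>i| (r x - A x)\<^sub>i \<le> 0\<close>.\<close>

lemma subinvariant_no_left_eigvec:
  fixes A :: "real^'k^'k"
  assumes nn: "\<forall>i j. 0 \<le> A$i$j" and x: "\<forall>i. 0 < x$i" and sub: "\<forall>i. (A *v x)$i < r * x$i"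
    and q: "transpose A *v q = r *s q"
  shows "q = 0"
proof -
  define e where "e i = r * x$i - (A *v x)$i" for i
  have e: "0 < e i" for i using sub by (simp add: e_def)
  have r: "0 \<le> r"
  proof -
    obtain i :: 'k where True by simp
    have "0 \<le> (A *v x)$i" using nn x by (auto simp: mv_nth less_imp_le intro!: sum_nonneg)
    hence "0 < r * x$i" using sub[rule_format, of i] by linarith
    thus ?thesis using x[rule_format, of i] by (simp add: zero_less_mult_iff)
  qed
  have col: "r * \<bar>q$j\<bar> \<le> (\<Sum>i\<in>UNIV. A$i$j * \<bar>q$i\<bar>)" for j
  proof -
    have "(\<Sum>i\<in>UNIV. A$i$j * q$i) = r * q$j"
      using arg_cong[OF q, of "\<lambda>v. v$j"] unfolding tmv_nth by simp
    hence "r * \<bar>q$j\<bar> = \<bar>\<Sum>i\<in>UNIV. A$i$j * q$i\<bar>" using r by (simp add: abs_mult)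
    also have "\<dots> \<le> (\<Sum>i\<in>UNIV. \<bar>A$i$j * q$i\<bar>)" by (rule sum_abs)
    also have "\<dots> = (\<Sum>i\<in>UNIV. A$i$j * \<bar>q$i\<bar>)" using nn by (simp add: abs_mult)
    finally show ?thesis .
  qed
  have "(\<Sum>j\<in>UNIV. x$j * (r * \<bar>q$j\<bar>)) \<le> (\<Sum>j\<in>UNIV. x$j * (\<Sum>i\<in>UNIV. A$i$j * \<bar>q$i\<bar>))"
    using x col by (intro sum_mono mult_left_mono) (auto simp: less_imp_le)
  also have "\<dots> = (\<Sum>i\<in>UNIV. \<bar>q$i\<bar> * (A *v x)$i)"
    by (simp add: mv_nth sum_distrib_left) (subst sum.swap, simp add: mult_ac)
  finally have "(\<Sum>i\<in>UNIV. \<bar>q$i\<bar> * e i) \<le> 0"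
    by (simp add: e_def right_diff_distrib sum_subtractf mult_ac)
  moreover have nn_e: "\<forall>i\<in>UNIV. 0 \<le> \<bar>q$i\<bar> * e i" using e by (simp add: less_imp_le)
  ultimately have "(\<Sum>i\<in>UNIV. \<bar>q$i\<bar> * e i) = 0" using sum_nonneg[of UNIV] by (meson order.antisym)
  hence zero: "\<forall>i\<in>UNIV. \<bar>q$i\<bar> * e i = 0"
    using nn_e sum_nonneg_eq_0_iff[of "UNIV :: 'k set" "\<lambda>i. \<bar>q$i\<bar> * e i"] by simp
  have "q$i = 0" for i
  proof -
    have "\<bar>q$i\<bar> * e i = 0" using zero by blast
    thus ?thesis using e[of i] by simp
  qed
  thus ?thesis by (simp add: vec_eq_iff)
qed

section \<open>The Friedland--Karlin inequality\<close>

text \<open>Row-wise bound: with \<open>P\<^sub>k\<^sub>j = B\<^sub>k\<^sub>j x\<^sub>j / (r x\<^sub>k)\<close>, a stochastic matrix, and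
  \<open>u\<^sub>j = p\<^sub>j / x\<^sub>j\<close>, concavity of \<open>ln\<close> gives
  \<open>ln ((B p)\<^sub>k / p\<^sub>k) \<ge> ln r + \<Sum>\<^sub>j P\<^sub>k\<^sub>j (ln u\<^sub>j - ln u\<^sub>k)\<close>.\<close>

lemma fk_row_bound:
  fixes B :: "real^'k^'k"
  assumes nn: "\<forall>i j. 0 \<le> B$i$j" and x: "\<forall>i. 0 < x$i" and ex: "B *v x = r *s x"
    and r: "0 < r" and p: "\<forall>i. 0 < p$i"
  shows "ln r + (\<Sum>j\<in>UNIV. B$k$j * x$j / (r * x$k) * (ln (p$j / x$j) - ln (p$k / x$k)))
           \<le> ln ((B *v p)$k / p$k)"
proof -
  define u where "u j = p$j / x$j" for j
  define P where "P j = B$k$j * x$j / (r * x$k)" for j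
  have upos: "0 < u j" for j using p x by (simp add: u_def)
  have Pnn: "0 \<le> P j" for j using nn x r by (simp add: P_def less_imp_le)
  have Psum: "(\<Sum>j\<in>UNIV. P j) = 1"
  proof -
    have "(\<Sum>j\<in>UNIV. P j) = (B *v x)$k / (r * x$k)"
      by (simp add: P_def mv_nth sum_divide_distrib)
    also have "\<dots> = 1" using ex x[rule_format, of k] r by simp
    finally show ?thesis .
  qed
  have e: "(B *v p)$k / p$k = r * (\<Sum>j\<in>UNIV. P j * (u j / u k))"
  proof -
    have "(\<Sum>j\<in>UNIV. P j * (u j / u k)) = (\<Sum>j\<in>UNIV. B$k$j * p$j / (r * p$k))"
    proof (intro sum.cong refl)
      fix j
      have "x$j > 0" "x$k > 0" "p$j > 0" "p$k > 0" using x p by auto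
      thus "P j * (u j / u k) = B$k$j * p$j / (r * p$k)" using r by (simp add: P_def u_def field_simps)
    qed
    also have "\<dots> = (B *v p)$k / (r * p$k)" by (simp add: mv_nth sum_divide_distrib)
    finally show ?thesis using r p[rule_format, of k] by simp
  qed
  have "(\<Sum>j\<in>UNIV. P j * ln (u j / u k)) \<le> ln (\<Sum>j\<in>UNIV. P j *\<^sub>R (u j / u k))"
    by (rule concave_on_sum[OF _ _ ln_concave]) (use Psum Pnn upos in auto)
  moreover have "(\<Sum>j\<in>UNIV. P j * ln (u j / u k)) = (\<Sum>j\<in>UNIV. P j * (ln (u j) - ln (u k)))"
    using upos by (intro sum.cong refl) (simp add: ln_div less_imp_neq[symmetric])
  moreover have "0 < (\<Sum>j\<in>UNIV. P j * (u j / u k))"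
  proof -
    obtain j where "0 < P j" using Psum Pnn by (metis less_eq_real_def sum.neutral zero_neq_one)
    hence "0 < P j * (u j / u k)" using upos by simp
    also have "\<dots> \<le> (\<Sum>j\<in>UNIV. P j * (u j / u k))"
      by (rule member_le_sum) (use Pnn upos in \<open>auto simp: less_imp_le\<close>)
    finally show ?thesis .
  qed
  ultimately show ?thesis using e r by (simp add: ln_mult P_def u_def)
qed

text \<open>The Perron weight \<open>w = y \<circ> x\<close> is a stationary distribution of the stochastic
  matrix \<open>P\<close> above.\<close>

lemma perron_weight_stationary:
  fixes B :: "real^'k^'k"
  assumes x: "\<forall>i. 0 < x$i" and ey: "transpose B *v y = r *s y" and r: "0 < r"
  shows "(\<Sum>k\<in>UNIV. (y$k * x$k) * (B$k$j * x$j / (r * x$k))) = y$j * x$j"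
proof -
  have "(\<Sum>k\<in>UNIV. (y$k * x$k) * (B$k$j * x$j / (r * x$k)))
      = (\<Sum>k\<in>UNIV. B$k$j * y$k * x$j / r)"
  proof (intro sum.cong refl)
    fix k have "x$k > 0" using x by auto
    thus "(y$k * x$k) * (B$k$j * x$j / (r * x$k)) = B$k$j * y$k * x$j / r" by (simp add: field_simps)
  qed
  also have "\<dots> = (\<Sum>k\<in>UNIV. B$k$j * y$k) * x$j / r"
    by (simp add: sum_distrib_right sum_divide_distrib)
  also have "(\<Sum>k\<in>UNIV. B$k$j * y$k) = r * y$j"
    using arg_cong[OF ey, of "\<lambda>v. v$j"] unfolding tmv_nth by simp
  finally show ?thesis using r by simp
qed

text \<open>Summing the row bounds
  with the stationary weights makes the correction terms telescope.\<close>

lemma friedland_karlin: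
  fixes B :: "real^'k^'k"
  assumes nn: "\<forall>i j. 0 \<le> B$i$j" and x: "\<forall>i. 0 < x$i" and y: "\<forall>i. 0 < y$i"
    and ex: "B *v x = r *s x" and ey: "transpose B *v y = r *s y" and r: "0 < r"
    and p: "\<forall>i. 0 < p$i"
  shows "(\<Sum>k\<in>UNIV. y$k * x$k) * ln r \<le> (\<Sum>k\<in>UNIV. (y$k * x$k) * ln ((B *v p)$k / p$k))"
proof -
  define w where "w k = y$k * x$k" for k
  define P where "P k j = B$k$j * x$j / (r * x$k)" for k j
  define l where "l j = ln (p$j / x$j)" for j
  have Psum: "(\<Sum>j\<in>UNIV. P k j) = 1" for k
    using ex x[rule_format, of k] r by (simp add: P_def mv_nth sum_divide_distrib[symmetric] vec_eq_iff)
  have "(\<Sum>k\<in>UNIV. w k * (\<Sum>j\<in>UNIV. P k j * (l j - l k)))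
      = (\<Sum>k\<in>UNIV. \<Sum>j\<in>UNIV. w k * P k j * l j) - (\<Sum>k\<in>UNIV. w k * l k * (\<Sum>j\<in>UNIV. P k j))"
    by (simp add: sum_distrib_left sum_subtractf[symmetric] algebra_simps)
  also have "(\<Sum>k\<in>UNIV. \<Sum>j\<in>UNIV. w k * P k j * l j) = (\<Sum>j\<in>UNIV. (\<Sum>k\<in>UNIV. w k * P k j) * l j)"
    by (subst sum.swap) (simp add: sum_distrib_right)
  also have "\<dots> - (\<Sum>k\<in>UNIV. w k * l k * (\<Sum>j\<in>UNIV. P k j)) = 0"
    using perron_weight_stationary[OF x ey r] Psum by (simp add: w_def P_def)
  finally have telescope: "(\<Sum>k\<in>UNIV. w k * (\<Sum>j\<in>UNIV. P k j * (l j - l k))) = 0" .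
  have "(\<Sum>k\<in>UNIV. w k) * ln r = (\<Sum>k\<in>UNIV. w k * (ln r + (\<Sum>j\<in>UNIV. P k j * (l j - l k))))"
    using telescope by (simp add: distrib_left sum.distrib sum_distrib_right)
  also have "\<dots> \<le> (\<Sum>k\<in>UNIV. w k * ln ((B *v p)$k / p$k))"
    using fk_row_bound[OF nn x ex r p] x y
    by (intro sum_mono mult_left_mono) (auto simp: w_def P_def l_def less_imp_le)
  finally show ?thesis by (simp add: w_def)
qed

section \<open>Consequences of assumptions (A2) and (A3) on \<open>\<phi>\<close>\<close>

lemma jensen_psi:
  fixes \<phi> :: "real \<Rightarrow> real" and w a :: "'k::finite \<Rightarrow> real"
  assumes mono: "strict_mono_on {0<..} \<phi>"
    and A3: "convex_on (\<phi> ` {0<..}) (\<lambda>q. ln (the_inv_into {0<..} \<phi> q))"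
    and w: "\<forall>k. 0 \<le> w k" "(\<Sum>k\<in>UNIV. w k) = 1"
    and a: "\<forall>k. 0 < a k" and rho: "0 < \<rho>"
    and s: "ln \<rho> \<le> (\<Sum>k\<in>UNIV. w k * ln (a k))"
  shows "psi \<phi> \<rho> \<le> (\<Sum>k\<in>UNIV. w k * psi \<phi> (a k))"
proof -
  let ?Q = "\<phi> ` {0<..}"
  let ?h = "\<lambda>q. ln (the_inv_into {0<..} \<phi> q)"
  have inj: "inj_on \<phi> {0<..}" using mono strict_mono_on_imp_inj_on by blast
  have hphi: "?h (\<phi> x) = ln x" if "0 < x" for x
    using the_inv_into_f_f[OF inj] that by simp
  have convQ: "convex ?Q" using A3 unfolding convex_on_def by blast
  define q where "q k = \<phi> (1 / a k)" for k
  have qQ: "q k \<in> ?Q" for k using a by (simp add: q_def)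
  have "(\<Sum>k\<in>UNIV. w k *\<^sub>R q k) \<in> ?Q"
    by (rule convex_sum[OF _ convQ]) (use w qQ in auto)
  then obtain x0 where x0: "0 < x0" "(\<Sum>k\<in>UNIV. w k *\<^sub>R q k) = \<phi> x0" by auto
  have "ln x0 = ?h (\<Sum>k\<in>UNIV. w k *\<^sub>R q k)" using x0 hphi by simp
  also have "\<dots> \<le> (\<Sum>k\<in>UNIV. w k * ?h (q k))"
    by (rule convex_on_sum[OF _ _ A3]) (use w qQ in auto)
  also have "\<dots> = (\<Sum>k\<in>UNIV. - (w k * ln (a k)))"
    using a hphi by (intro sum.cong refl) (simp add: q_def ln_div)
  also have "\<dots> \<le> ln (1 / \<rho>)" using s rho by (simp add: sum_negf ln_div)
  finally have "x0 \<le> 1 / \<rho>" using x0 rho by simp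
  hence "\<phi> x0 \<le> \<phi> (1 / \<rho>)" using x0 rho by (intro strict_mono_on_leD[OF mono]) auto
  moreover have "(\<Sum>k\<in>UNIV. w k * psi \<phi> (a k)) = - (\<Sum>k\<in>UNIV. w k * q k)"
    by (simp add: psi_def q_def sum_negf[symmetric])
  ultimately show ?thesis using x0(2) by (simp add: psi_def)
qed

lemma psi_strict_mono:
  assumes mono: "strict_mono_on {0<..} \<phi>" and "0 < a" "a < b"
  shows "psi \<phi> a < psi \<phi> b"
proof -
  have "1/b < 1/a" using assms by (simp add: divide_strict_left_mono)
  hence "\<phi> (1/b) < \<phi> (1/a)" using assms by (intro strict_mono_onD[OF mono]) auto
  thus ?thesis by (simp add: psi_def)
qed

text \<open>Log-convexity of \<open>\<phi>\<^sup>-\<^sup>1\<close> forces \<open>\<phi>' > 0\<close>: for \<open>x < x\<^sub>0\<close> the chord slope of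
  \<open>h = ln \<circ> \<phi>\<^sup>-\<^sup>1\<close> between \<open>\<phi> x\<close> and \<open>\<phi> x\<^sub>0\<close> is bounded by a fixed slope \<open>s\<close> to the right
  of \<open>\<phi> x\<^sub>0\<close>, and \<open>ln x\<^sub>0 - ln x \<ge> (x\<^sub>0 - x)/x\<^sub>0\<close>, so the difference quotients of \<open>\<phi>\<close>
  at \<open>x\<^sub>0\<close> from the left stay above \<open>1/(s x\<^sub>0) > 0\<close>.\<close>

lemma phi_deriv_pos:
  assumes mono: "strict_mono_on {0<..} \<phi>"
    and A3: "convex_on (\<phi> ` {0<..}) (\<lambda>q. ln (the_inv_into {0<..} \<phi> q))"
    and x0: "0 < x0" and D: "(\<phi> has_real_derivative D) (at x0)"
  shows "0 < D"
proof -
  let ?h = "\<lambda>q. ln (the_inv_into {0<..} \<phi> q)"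
  have inj: "inj_on \<phi> {0<..}" using mono strict_mono_on_imp_inj_on by blast
  have hphi: "?h (\<phi> x) = ln x" if "0 < x" for x
    using the_inv_into_f_f[OF inj] that by simp
  define x1 where "x1 = 2 * x0"
  have q01: "\<phi> x0 < \<phi> x1" using x0 by (intro strict_mono_onD[OF mono]) (auto simp: x1_def)
  define s where "s = (ln x1 - ln x0) / (\<phi> x1 - \<phi> x0)"
  have s: "0 < s" using x0 q01 by (simp add: s_def x1_def ln_mult)
  have quot: "1 / (s * x0) \<le> (\<phi> x - \<phi> x0) / (x - x0)" if x: "0 < x" "x < x0" for x
  proof -
    have q0: "\<phi> x < \<phi> x0" using x by (intro strict_mono_onD[OF mono]) auto
    have I: "\<phi> x \<in> \<phi> ` {0<..}" "\<phi> x1 \<in> \<phi> ` {0<..}" using x x0 by (auto simp: x1_def)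
    have "(?h (\<phi> x) - ?h (\<phi> x0)) / (\<phi> x - \<phi> x0) \<le> (?h (\<phi> x) - ?h (\<phi> x1)) / (\<phi> x - \<phi> x1)"
      by (rule convex_on_slope_le(1)[OF A3 I q0 q01])
    also have "\<dots> \<le> (?h (\<phi> x0) - ?h (\<phi> x1)) / (\<phi> x0 - \<phi> x1)"
      by (rule convex_on_slope_le(2)[OF A3 I q0 q01])
    finally have "(ln x - ln x0) / (\<phi> x - \<phi> x0) \<le> (ln x0 - ln x1) / (\<phi> x0 - \<phi> x1)"
      using x x0 hphi by (simp add: x1_def)
    hence "(ln x0 - ln x) / (\<phi> x0 - \<phi> x) \<le> s"
      unfolding s_def by (metis minus_diff_eq minus_divide_divide)
    hence "ln x0 - ln x \<le> s * (\<phi> x0 - \<phi> x)" using q0 by (simp add: divide_le_eq mult.commute)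
    moreover have "(x0 - x) / x0 \<le> ln x0 - ln x"
      using ln_le_minus_one[of "x / x0"] x x0 by (simp add: ln_div diff_divide_distrib)
    ultimately have "(x0 - x) / x0 \<le> s * (\<phi> x0 - \<phi> x)" by linarith
    hence "1 / (s * x0) \<le> (\<phi> x0 - \<phi> x) / (x0 - x)"
      using x x0 s by (simp add: field_simps)
    thus ?thesis by (metis minus_diff_eq minus_divide_divide)
  qed
  have "(\<phi> has_real_derivative D) (at x0 within {..<x0})" using D by (rule has_field_derivative_at_within)
  hence "((\<lambda>y. (\<phi> y - \<phi> x0) / (y - x0)) \<longlongrightarrow> D) (at_left x0)"
    by (simp add: has_field_derivative_iff)
  moreover have "eventually (\<lambda>y. 1 / (s * x0) \<le> (\<phi> y - \<phi> x0) / (y - x0)) (at_left x0)"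
    using eventually_at_left_real[OF x0] by eventually_elim (use quot in auto)
  ultimately have "1 / (s * x0) \<le> D" by (rule tendsto_lowerbound) simp
  moreover have "0 < 1 / (s * x0)" using s x0 by simp
  ultimately show ?thesis by linarith
qed

section \<open>Tools from convex analysis and calculus\<close>

text \<open>The cone is closed, so a point outside is strictly separated from it.\<close>

lemma farkas_cone:
  fixes v :: "real^'k" and S :: "(real^'k) set"
  assumes fin: "finite S" and H: "\<forall>d. (\<forall>s\<in>S. s \<bullet> d \<le> 0) \<longrightarrow> v \<bullet> d \<le> 0"
  shows "v \<in> convex_cone hull S"
proof (rule ccontr)
  let ?K = "convex_cone hull S"
  assume nv: "v \<notin> ?K"
  obtain a b where ab: "a \<bullet> v < b" "\<forall>x\<in>?K. b < a \<bullet> x"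
    using separating_hyperplane_closed_point[OF convex_convex_cone_hull closed_convex_cone_hull[OF fin] nv]
    by blast
  have b0: "b < 0" using ab(2) convex_cone_hull_contains_0 by force
  have as: "0 \<le> a \<bullet> s" if s: "s \<in> S" for s
  proof (rule ccontr)
    assume "\<not> 0 \<le> a \<bullet> s"
    hence neg: "a \<bullet> s < 0" by simp
    define c where "c = 2 * b / (a \<bullet> s)"
    have c0: "0 \<le> c" using neg b0 by (simp add: c_def divide_nonpos_neg)
    have "c *\<^sub>R s \<in> ?K"
      by (rule conicD[OF conic_convex_cone_hull]) (use s c0 hull_inc in auto)
    hence "b < a \<bullet> (c *\<^sub>R s)" using ab(2) by blast
    also have "a \<bullet> (c *\<^sub>R s) = 2 * b" using neg by (simp add: c_def)
    finally show False using b0 by simp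
  qed
  have "\<forall>s\<in>S. s \<bullet> (- a) \<le> 0" using as by (simp add: inner_commute)
  hence "v \<bullet> (- a) \<le> 0" using H by blast
  hence "0 \<le> a \<bullet> v" by (simp add: inner_commute)
  thus False using ab(1) b0 by simp
qed

lemma convex_cone_hull_on_hyperplane:
  fixes S :: "'a::real_inner set"
  assumes S: "\<forall>s\<in>S. a \<bullet> s = 1" and x: "x \<in> convex_cone hull S" "a \<bullet> x = 1"
  shows "x \<in> convex hull S"
proof -
  have "x \<noteq> 0" using x(2) by auto
  then obtain c y where y: "y \<in> convex hull S" and xy: "x = c *\<^sub>R y"
    using x(1) unfolding convex_cone_hull_convex_hull by blast
  have "convex hull S \<subseteq> {y. a \<bullet> y = 1}"
    using S by (intro hull_minimal convex_hyperplane) auto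
  hence "a \<bullet> y = 1" using y by blast
  hence "c = 1" using x(2) by (simp add: xy)
  thus ?thesis using y xy by simp
qed

text \<open>A linear form on weights that is bounded by \<open>m\<close> on the open simplex is bounded
  coefficientwise: \<open>b\<^sub>k\<^sub>0\<close> is the limit of the form at weights approaching the vertex \<open>k\<^sub>0\<close>.\<close>

lemma simplex_bound_coefficient:
  fixes b :: "'k::finite \<Rightarrow> real"
  assumes H: "\<forall>w\<in>simplex_plus. (\<Sum>k\<in>UNIV. w$k * b k) \<le> m"
  shows "b k0 \<le> m"
proof -
  define avg where "avg = (\<Sum>k\<in>UNIV. b k) / real CARD('k)"
  define wt :: "real \<Rightarrow> real^'k"
    where "wt e = (\<chi> k. (1 - e) * (if k = k0 then 1 else 0) + e / real CARD('k))" for e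
  have val: "(\<Sum>k\<in>UNIV. wt e $ k * b k) = (1 - e) * b k0 + e * avg" for e
  proof -
    have "(\<Sum>k\<in>UNIV. wt e $ k * b k)
        = (\<Sum>k\<in>UNIV. (1 - e) * (if k = k0 then b k else 0) + e / real CARD('k) * b k)"
      by (rule sum.cong) (auto simp: wt_def distrib_right)
    also have "\<dots> = (1 - e) * b k0 + e * avg"
      by (simp add: sum.distrib sum_distrib_left[symmetric] sum_divide_distrib[symmetric] avg_def)
    finally show ?thesis .
  qed
  have wt: "wt e \<in> simplex_plus" if "0 < e" "e < 1" for e
  proof -
    have "(\<Sum>k\<in>UNIV. (1 - e) * (if k = k0 then 1 else 0)) = 1 - e"
      by (simp add: sum_distrib_left[symmetric])
    thus ?thesis using that by (simp add: simplex_plus_def wt_def sum.distrib add_nonneg_pos)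
  qed
  have "eventually (\<lambda>e. e \<in> {0<..<(1::real)}) (at_right 0)"
    by (rule eventually_at_right_real) simp
  hence "eventually (\<lambda>e. (1 - e) * b k0 + e * avg \<le> m) (at_right 0)"
    by eventually_elim (use H val wt in force)
  moreover have "((\<lambda>e. (1 - e) * b k0 + e * avg) \<longlongrightarrow> (1 - 0) * b k0 + 0 * avg) (at_right 0)"
    by (intro tendsto_intros)
  ultimately show ?thesis by (intro tendsto_upperbound) auto
qed

lemma deriv_nonneg_at_right_min:
  fixes f :: "real \<Rightarrow> real"
  assumes D: "(f has_real_derivative D) (at 0)" and min: "eventually (\<lambda>h. f 0 \<le> f h) (at_right 0)"
  shows "0 \<le> D"
proof (rule ccontr)
  assume "\<not> 0 \<le> D"
  then obtain \<delta> where \<delta>: "0 < \<delta>" "\<forall>h>0. h < \<delta> \<longrightarrow> f (0 + h) < f 0"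
    using DERIV_neg_dec_right[OF D] by auto
  have "eventually (\<lambda>h. h \<in> {0<..<\<delta>}) (at_right 0)" by (rule eventually_at_right_real[OF \<delta>(1)])
  hence "eventually (\<lambda>h. False) (at_right (0::real))"
    using min by eventually_elim (use \<delta>(2) in force)
  thus False by simp
qed

lemma minimax_value:
  fixes G :: "'a \<Rightarrow> 'b \<Rightarrow> real"
  assumes w1: "w1 \<in> W" and p1: "p1 \<in> P"
    and lower: "\<forall>p\<in>P. v \<le> G w1 p" and upper: "\<forall>w\<in>W. G w p1 \<le> v"
  shows "(SUP w\<in>W. INF p\<in>P. ereal (G w p)) = ereal v"
    and "(INF p\<in>P. SUP w\<in>W. ereal (G w p)) = ereal v"
proof -
  have "ereal v \<le> (SUP w\<in>W. INF p\<in>P. ereal (G w p))"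
    by (rule SUP_upper2[OF w1], rule INF_greatest) (use lower in simp)
  moreover have "(SUP w\<in>W. INF p\<in>P. ereal (G w p)) \<le> ereal v"
    by (rule SUP_least, rule INF_lower2[OF p1]) (use upper in simp)
  ultimately show "(SUP w\<in>W. INF p\<in>P. ereal (G w p)) = ereal v" by (rule antisym[rotated])
  have "ereal v \<le> (INF p\<in>P. SUP w\<in>W. ereal (G w p))"
    by (rule INF_greatest, rule SUP_upper2[OF w1]) (use lower in simp)
  moreover have "(INF p\<in>P. SUP w\<in>W. ereal (G w p)) \<le> ereal v"
    by (rule INF_lower2[OF p1], rule SUP_least) (use upper in simp)
  ultimately show "(INF p\<in>P. SUP w\<in>W. ereal (G w p)) = ereal v" by (rule antisym[rotated])
qed

section \<open>The power control model\<close>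

lemma Gfun_eq: "Gfun \<phi> gamma V z w p = (\<Sum>k\<in>UNIV. - (w$k * \<phi> (SIR V z p k / gamma$k)))"
  by (simp add: Gfun_def psi_def)

locale network =
  fixes C :: "real^'k^'n" and phat :: "real^'n"
    and V :: "real^'k^'k" and z gamma :: "real^'k"
  assumes C_nonneg: "\<forall>n k. 0 \<le> C$n$k"
    and C_covers: "\<forall>k. \<exists>n. 0 < C$n$k"
    and phat_pos: "\<forall>n. 0 < phat$n"
    and V_nonneg: "\<forall>i j. 0 \<le> V$i$j"
    and V_irred: "irreducible_mat V"
    and z_pos: "\<forall>k. 0 < z$k"
    and gamma_pos: "\<forall>k. 0 < gamma$k"
begin

abbreviation B :: "'n \<Rightarrow> real^'k^'k" where "B \<equiv> Bmat gamma V z C phat"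
abbreviation g :: "'n \<Rightarrow> real^'k \<Rightarrow> real" where "g \<equiv> gfun C phat"

text \<open>The power \<open>\<gamma>\<^sub>k ((V p)\<^sub>k + z\<^sub>k)\<close> that link \<open>k\<close> needs to meet its SIR target exactly
  under the interference caused by \<open>p\<close>, and the largest spectral radius
  \<open>\<rho>\<^sub>m\<^sub>a\<^sub>x = max\<^sub>n \<rho>(B\<^sup>(\<^sup>n\<^sup>))\<close>.\<close>

definition required_power :: "real^'k \<Rightarrow> 'k \<Rightarrow> real" where
  "required_power p k = gamma$k * ((V *v p)$k + z$k)"

definition rho_max :: real where
  "rho_max = Max (range (\<lambda>n. spectral_radius (B n)))"

lemma g_sum: "g n p = (\<Sum>j\<in>UNIV. C$n$j * p$j) / phat$n"
  by (simp add: gfun_def inner_real_vec)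

lemma g_scale: "g n (c *s p) = c * g n p"
  by (simp add: g_sum sum_distrib_left algebra_simps)

lemma g_add: "g n (p + q) = g n p + g n q"
  by (simp add: g_sum sum.distrib distrib_left add_divide_distrib)

lemma power_set_P_iff: "p \<in> power_set_P C phat \<longleftrightarrow> (\<forall>k. 0 \<le> p$k) \<and> (\<forall>m. g m p \<le> 1)"
proof -
  have "(C *v p)$m \<le> phat$m \<longleftrightarrow> g m p \<le> 1" for m
    using phat_pos[rule_format, of m] by (simp add: g_sum mv_nth divide_le_eq_1)
  thus ?thesis by (simp add: power_set_P_def)
qed

lemma B_nth: "(B n *v p)$i = gamma$i * ((V *v p)$i + z$i * g n p)"
proof -
  have "(B n *v p)$i = (\<Sum>j\<in>UNIV. gamma$i * (V$i$j * p$j) + gamma$i * z$i / phat$n * (C$n$j * p$j))"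
    by (simp add: Bmat_def mv_nth algebra_simps)
  also have "\<dots> = gamma$i * ((V *v p)$i + z$i * g n p)"
    by (simp add: sum.distrib mv_nth g_sum sum_distrib_left sum_divide_distrib mult_ac distrib_left)
  finally show ?thesis .
qed

lemma B_tight: "g n p = 1 \<Longrightarrow> (B n *v p)$i = required_power p i"
  by (simp add: B_nth required_power_def)

lemma B_le_required: "g n p \<le> 1 \<Longrightarrow> (B n *v p)$i \<le> required_power p i"
  unfolding B_nth required_power_def using z_pos gamma_pos
  by (intro mult_left_mono add_left_mono) (auto simp: less_imp_le mult_le_cancel_left1)

lemma B_nonneg: "\<forall>i j. 0 \<le> B n$i$j"
  using V_nonneg gamma_pos z_pos phat_pos C_nonneg by (simp add: Bmat_def less_imp_le)

lemma B_irreducible: "irreducible_mat (B n)"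
proof -
  have "{(a, b). V$a$b > 0} \<subseteq> {(a, b). B n$a$b > 0}"
  proof (clarify)
    fix a b assume "0 < V$a$b"
    hence "0 < gamma$a * V$a$b" using gamma_pos by simp
    moreover have "0 \<le> gamma$a * z$a * C$n$b / phat$n"
      using gamma_pos z_pos phat_pos C_nonneg by (simp add: less_imp_le)
    ultimately show "0 < B n$a$b" by (simp add: Bmat_def)
  qed
  thus ?thesis using V_irred trancl_mono unfolding irreducible_mat_def by metis
qed

lemma required_power_pos: "\<forall>j. 0 \<le> p$j \<Longrightarrow> 0 < required_power p k"
  unfolding required_power_def using V_nonneg z_pos gamma_pos
  by (intro mult_pos_pos add_nonneg_pos) (auto simp: mv_nth intro!: sum_nonneg)

lemma SIR_div_gamma: "\<forall>j. 0 \<le> p$j \<Longrightarrow> SIR V z p k / gamma$k = p$k / required_power p k"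
  by (simp add: SIR_def required_power_def mult.commute)

lemma gamma_div_SIR: "\<forall>j. 0 \<le> p$j \<Longrightarrow> gamma$k / SIR V z p k = required_power p k / p$k"
  by (simp add: SIR_def required_power_def mult.commute)

lemma rho_max_attained: "\<exists>n0. spectral_radius (B n0) = rho_max"
proof -
  have "rho_max \<in> range (\<lambda>n. spectral_radius (B n))" unfolding rho_max_def by (rule Max_in) auto
  thus ?thesis by auto
qed

lemma rho_le_max: "spectral_radius (B n) \<le> rho_max"
  unfolding rho_max_def by (rule Max_ge) auto

lemma rho_max_pos: "0 < rho_max"
proof -
  obtain n0 where n0: "spectral_radius (B n0) = rho_max" using rho_max_attained by blast
  obtain x where x: "\<forall>i. 0 < x$i" "B n0 *v x = rho_max *s x"
    using perron_eigvec_exists[OF B_nonneg B_irreducible, of n0] unfolding n0 by blast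
  obtain i :: 'k where True by simp
  have "0 < (B n0 *v x)$i" by (rule irreducible_mult_pos[OF B_nonneg B_irreducible x(1)])
  thus ?thesis using x by (simp add: zero_less_mult_iff) (meson not_less_iff_gr_or_eq x(1))
qed

lemma normalised_perron_vector:
  assumes n0: "spectral_radius (B n0) = rho_max"
  obtains x ms where "\<forall>i. 0 < x$i" "\<forall>m. g m x \<le> 1" "g ms x = 1" "B n0 *v x = rho_max *s x"
proof -
  obtain x0 where x0: "\<forall>i. 0 < x0$i" "B n0 *v x0 = rho_max *s x0"
    using perron_eigvec_exists[OF B_nonneg B_irreducible, of n0] unfolding n0 by blast
  define gm where "gm = Max (range (\<lambda>m. g m x0))"
  have "gm \<in> range (\<lambda>m. g m x0)" unfolding gm_def by (rule Max_in) auto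
  then obtain ms where ms: "g ms x0 = gm" by auto
  have g_le: "g m x0 \<le> gm" for m unfolding gm_def by (rule Max_ge) auto
  have gm_pos: "0 < gm"
  proof -
    obtain k :: 'k where True by simp
    obtain n where n: "0 < C$n$k" using C_covers by blast
    have "0 < C$n$k * x0$k" using n x0(1) by simp
    also have "\<dots> \<le> (\<Sum>j\<in>UNIV. C$n$j * x0$j)"
      by (rule member_le_sum) (use C_nonneg x0(1) in \<open>auto simp: less_imp_le\<close>)
    finally have "0 < g n x0" using phat_pos by (simp add: g_sum)
    thus ?thesis using g_le[of n] by linarith
  qed
  define x where "x = (1 / gm) *s x0"
  have "\<forall>i. 0 < x$i" using x0(1) gm_pos by (simp add: x_def)
  moreover have "\<forall>m. g m x \<le> 1" using g_le gm_pos by (simp add: x_def g_scale)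
  moreover have "g ms x = 1" using gm_pos ms by (simp add: x_def g_scale)
  moreover have "B n0 *v x = rho_max *s x" by (simp add: x_def vec.scale x0(2) algebra_simps)
  ultimately show thesis using that by blast
qed

text \<open>There is a feasible positive power vector \<open>x\<close> meeting every target with equality
  at level \<open>\<rho>\<^sub>m\<^sub>a\<^sub>x\<close> and a tight constraint \<open>m\<^sub>s\<close> for which \<open>x\<close> is a Perron vector of
  \<open>B\<^sup>(\<^sup>m\<^sup>s\<^sup>)\<close>: comparing \<open>B\<^sup>(\<^sup>m\<^sup>s\<^sup>) x \<ge> B\<^sup>(\<^sup>n\<^sup>0\<^sup>) x = \<rho>\<^sub>m\<^sub>a\<^sub>x x\<close> with the left Perron vector of
  \<open>B\<^sup>(\<^sup>m\<^sup>s\<^sup>)\<close>, whose eigenvalue is at most \<open>\<rho>\<^sub>m\<^sub>a\<^sub>x\<close>, forces equality.\<close>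

lemma balanced_power_exists:
  obtains x ms where "\<forall>i. 0 < x$i" "\<forall>m. g m x \<le> 1" "g ms x = 1" "B ms *v x = rho_max *s x"
proof -
  obtain n0 where n0: "spectral_radius (B n0) = rho_max" using rho_max_attained by blast
  obtain x ms where x: "\<forall>i. 0 < x$i" "\<forall>m. g m x \<le> 1" "g ms x = 1" "B n0 *v x = rho_max *s x"
    using normalised_perron_vector[OF n0] by blast
  define rm where "rm = spectral_radius (B ms)"
  obtain y where y: "\<forall>i. 0 < y$i" "transpose (B ms) *v y = rm *s y"
  proof -
    obtain xm where "\<forall>i. 0 < xm$i" "B ms *v xm = rm *s xm"
      using perron_eigvec_exists[OF B_nonneg B_irreducible] unfolding rm_def by blast
    thus thesis using perron_left_eigvec_exists[OF B_nonneg B_irreducible] that by blast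
  qed
  have ge: "rho_max * x$i \<le> (B ms *v x)$i" for i
  proof -
    have "(B n0 *v x)$i \<le> (B ms *v x)$i"
      unfolding B_nth using x(2,3) z_pos gamma_pos
      by (intro mult_left_mono add_left_mono) (auto simp: less_imp_le)
    thus ?thesis using x(4) by simp
  qed
  have "rm * x$i \<le> (B ms *v x)$i" for i
  proof -
    have "rm * x$i \<le> rho_max * x$i"
      using rho_le_max[of ms] x(1)[rule_format, of i] unfolding rm_def by simp
    thus ?thesis using ge[of i] by linarith
  qed
  hence Bx: "B ms *v x = rm *s x" using left_eigvec_squeeze_ge[OF y] by blast
  obtain i :: 'k where True by simp
  have "rho_max \<le> rm" using ge[of i] x(1) by (simp add: Bx)
  hence "rm = rho_max" using rho_le_max[of ms] unfolding rm_def by linarith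
  thus thesis using that x(1-3) Bx by blast
qed

text \<open>Indeed \<open>B\<^sup>(\<^sup>m\<^sup>s\<^sup>) p \<le> \<rho>\<^sub>m\<^sub>a\<^sub>x p\<close>, so by the squeeze principle
  \<open>p\<close> is an eigenvector of \<open>B\<^sup>(\<^sup>m\<^sup>s\<^sup>)\<close>, proportional to \<open>x\<close>; constraint \<open>m\<^sub>s\<close> is tight at
  \<open>p\<close>, which fixes the factor.\<close>

lemma required_power_bound_unique:
  assumes x: "\<forall>i. 0 < x$i" "g ms x = 1" "B ms *v x = rho_max *s x"
    and p: "p \<in> power_set_P C phat" and bound: "\<forall>k. required_power p k \<le> rho_max * p$k"
  shows "p = x"
proof -
  have pnn: "\<forall>j. 0 \<le> p$j" and gp: "g ms p \<le> 1" using p by (auto simp: power_set_P_iff)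
  obtain y where y: "\<forall>i. 0 < y$i" "transpose (B ms) *v y = rho_max *s y"
    using perron_left_eigvec_exists[OF B_nonneg B_irreducible x(1,3)] by blast
  have "(B ms *v p)$k \<le> rho_max * p$k" for k
    using B_le_required[OF gp, of k] bound[rule_format, of k] by linarith
  hence Bp: "B ms *v p = rho_max *s p" using left_eigvec_squeeze_le[OF y] by blast
  have g1: "g ms p = 1"
  proof -
    obtain k :: 'k where True by simp
    have "gamma$k * ((V *v p)$k + z$k * g ms p) = rho_max * p$k"
      using arg_cong[OF Bp, of "\<lambda>v. v$k"] by (simp add: B_nth)
    moreover have "gamma$k * ((V *v p)$k + z$k) \<le> rho_max * p$k"
      using bound by (simp add: required_power_def)
    ultimately have "gamma$k * ((V *v p)$k + z$k) \<le> gamma$k * ((V *v p)$k + z$k * g ms p)" by simp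
    hence "z$k \<le> z$k * g ms p" using gamma_pos[rule_format, of k] by simp
    hence "1 \<le> g ms p" using z_pos[rule_format, of k] by simp
    thus ?thesis using gp by simp
  qed
  obtain c where c: "p = c *s x"
    using nonneg_eigvec_proportional[OF B_nonneg B_irreducible x(1,3) pnn Bp] by blast
  have "c = 1" using g1 x(2) by (simp add: c g_scale)
  thus ?thesis using c by simp
qed

end

locale maxmin_optimum = network C phat V z gamma
  for C :: "real^'k^'n" and phat V z gamma +
  fixes pbar :: "real^'k"
  assumes pbar_in: "pbar \<in> power_set_P C phat"
    and pbar_max: "\<forall>p\<in>power_set_P C phat.
          (MIN k. SIR V z p k / gamma$k) \<le> (MIN k. SIR V z pbar k / gamma$k)"
begin

text \<open>At the optimum no required power exceeds \<open>\<rho>\<^sub>m\<^sub>a\<^sub>x pbar\<close>: a balanced vector reaches the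
  normalised SIR level \<open>1/\<rho>\<^sub>m\<^sub>a\<^sub>x\<close> on every link, so the optimum does as well.\<close>

lemma pbar_required_bound: "required_power pbar k \<le> rho_max * pbar$k"
proof -
  obtain x ms where x: "\<forall>i. 0 < x$i" "\<forall>m. g m x \<le> 1" "g ms x = 1" "B ms *v x = rho_max *s x"
    using balanced_power_exists by blast
  have xnn: "\<forall>j. 0 \<le> x$j" using x(1) by (simp add: less_imp_le)
  have "SIR V z x k / gamma$k = 1 / rho_max" for k
    using x(1)[rule_format, of k] rho_max_pos arg_cong[OF x(4), of "\<lambda>v. v$k"] B_tight[OF x(3)]
    by (simp add: SIR_div_gamma[OF xnn])
  hence "(MIN k. SIR V z x k / gamma$k) = 1 / rho_max" by simp
  moreover have "x \<in> power_set_P C phat" using xnn x(2) by (simp add: power_set_P_iff)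
  ultimately have "1 / rho_max \<le> (MIN k. SIR V z pbar k / gamma$k)" using pbar_max by metis
  also have "\<dots> \<le> SIR V z pbar k / gamma$k" by (rule Min_le) auto
  also have "\<dots> = pbar$k / required_power pbar k"
    using pbar_in by (simp add: power_set_P_iff SIR_div_gamma)
  finally have "1 / rho_max \<le> pbar$k / required_power pbar k" .
  moreover have "0 < required_power pbar k"
    using pbar_in by (simp add: power_set_P_iff required_power_pos)
  ultimately show ?thesis using rho_max_pos by (simp add: field_simps)
qed

lemma required_bound_imp_pbar:
  assumes p: "p \<in> power_set_P C phat" and bound: "\<forall>k. required_power p k \<le> rho_max * p$k"
  shows "p = pbar"
proof -
  obtain x ms where x: "\<forall>i. 0 < x$i" "\<forall>m. g m x \<le> 1" "g ms x = 1" "B ms *v x = rho_max *s x"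
    using balanced_power_exists by blast
  have "p = x" by (rule required_power_bound_unique[OF x(1,3,4) p bound])
  moreover have "pbar = x"
    by (rule required_power_bound_unique[OF x(1,3,4) pbar_in]) (simp add: pbar_required_bound)
  ultimately show ?thesis by simp
qed

lemma pbar_balanced:
  "(\<forall>i. 0 < pbar$i) \<and> (\<exists>ms. g ms pbar = 1) \<and> (\<forall>k. required_power pbar k = rho_max * pbar$k)"
proof -
  obtain x ms where x: "\<forall>i. 0 < x$i" "\<forall>m. g m x \<le> 1" "g ms x = 1" "B ms *v x = rho_max *s x"
    using balanced_power_exists by blast
  have req: "required_power x k = rho_max * x$k" for k
    using arg_cong[OF x(4), of "\<lambda>v. v$k"] B_tight[OF x(3)] by simp
  have "x \<in> power_set_P C phat" using x(1,2) by (simp add: power_set_P_iff less_imp_le)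
  hence "x = pbar" using req by (intro required_bound_imp_pbar) auto
  thus ?thesis using x(1,3) req by blast
qed

lemma pbar_pos: "0 < pbar$i"
  using pbar_balanced by blast

lemma pbar_required: "required_power pbar k = rho_max * pbar$k"
  using pbar_balanced by blast

lemma pbar_Pplus: "pbar \<in> power_set_Pplus C phat"
  using pbar_in pbar_pos by (simp add: power_set_Pplus_def)

lemma SIR_pbar: "SIR V z pbar k / gamma$k = 1 / rho_max"
proof -
  have "0 < pbar$k" "\<forall>j. 0 \<le> pbar$j" using pbar_pos by (auto simp: less_imp_le)
  thus ?thesis using rho_max_pos by (simp add: SIR_div_gamma pbar_required)
qed

text \<open>At the optimum every link has normalised SIR \<open>1/\<rho>\<^sub>m\<^sub>a\<^sub>x\<close>, so the utility does not
  depend on the weights.\<close>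

lemma G_pbar: assumes "w \<in> simplex_plus" shows "Gfun \<phi> gamma V z w pbar = psi \<phi> rho_max"
proof -
  have "Gfun \<phi> gamma V z w pbar = (\<Sum>k\<in>UNIV. w$k) * psi \<phi> rho_max"
    by (simp add: Gfun_eq SIR_pbar psi_def sum_distrib_right sum_negf)
  thus ?thesis using assms by (simp add: simplex_plus_def)
qed

lemma N0_eq: "N0 C phat pbar = {n. g n pbar = 1}"
proof -
  obtain ms where ms: "g ms pbar = 1" using pbar_balanced by blast
  have "\<forall>m. g m pbar \<le> 1" using pbar_in by (simp add: power_set_P_iff)
  hence "Max (range (\<lambda>m. g m pbar)) = 1" using ms by (intro Max_eqI) auto
  thus ?thesis unfolding N0_def by auto
qed

lemma N0_nonempty: "N0 C phat pbar \<noteq> {}"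
  using pbar_balanced N0_eq by auto

lemma B_pbar: assumes "n \<in> N0 C phat pbar" shows "B n *v pbar = rho_max *s pbar"
  using assms by (simp add: N0_eq vec_eq_iff B_tight pbar_required)

lemma rho_tight: assumes "n \<in> N0 C phat pbar" shows "spectral_radius (B n) = rho_max"
  by (rule spectral_radius_pos_eigvec[OF B_nonneg _ B_pbar[OF assms]]) (simp add: pbar_pos)

definition left_vec :: "'n \<Rightarrow> real^'k" where
  "left_vec n = (SOME y. (\<forall>i. 0 < y$i) \<and> transpose (B n) *v y = rho_max *s y \<and> y \<bullet> pbar = 1)"

definition perron_w :: "'n \<Rightarrow> real^'k" where
  "perron_w n = (\<chi> k. left_vec n $ k * pbar $ k)"

lemma left_vec:
  assumes n: "n \<in> N0 C phat pbar"
  shows "(\<forall>i. 0 < left_vec n$i) \<and> transpose (B n) *v left_vec n = rho_max *s left_vec n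
         \<and> left_vec n \<bullet> pbar = 1"
proof -
  obtain y where y: "\<forall>i. 0 < y$i" "transpose (B n) *v y = rho_max *s y"
    using perron_left_eigvec_exists[OF B_nonneg B_irreducible _ B_pbar[OF n]] pbar_pos by blast
  have yp: "0 < y \<bullet> pbar" using pos_inner_pos[OF y(1)] pbar_pos by blast
  define y' where "y' = (1 / (y \<bullet> pbar)) *s y"
  have "\<forall>i. 0 < y'$i" using y(1) yp by (simp add: y'_def)
  moreover have "transpose (B n) *v y' = rho_max *s y'" unfolding y'_def vec.scale y(2) by simp
  moreover have "y' \<bullet> pbar = 1" using yp by (simp add: y'_def scalar_mult_eq_scaleR)
  ultimately have "\<exists>y. (\<forall>i. 0 < y$i) \<and> transpose (B n) *v y = rho_max *s y \<and> y \<bullet> pbar = 1"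
    by blast
  thus ?thesis unfolding left_vec_def by (rule someI_ex)
qed

lemma perron_w_simplex: assumes "n \<in> N0 C phat pbar" shows "perron_w n \<in> simplex_plus"
  using left_vec[OF assms] pbar_pos by (simp add: simplex_plus_def perron_w_def inner_real_vec)

text \<open>\<open>w\<^sup>(\<^sup>n\<^sup>)\<close> is the weight \<open>perron_weight (B\<^sup>(\<^sup>n\<^sup>))\<close> of the statement: the right and left
  Perron vectors are unique up to scaling, and \<open>y \<bullet> x = 1\<close> fixes the product.\<close>

lemma perron_weight_eq: assumes n: "n \<in> N0 C phat pbar" shows "perron_weight (B n) = perron_w n"
  unfolding perron_weight_def rho_tight[OF n]
proof (rule the_equality)
  show "\<exists>x y. (\<forall>k. 0 < x$k) \<and> (\<forall>k. 0 < y$k) \<and> B n *v x = rho_max *s x \<and>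
      transpose (B n) *v y = rho_max *s y \<and> y \<bullet> x = 1 \<and> perron_w n = (\<chi> k. y$k * x$k)"
    using left_vec[OF n] pbar_pos B_pbar[OF n] by (auto simp: perron_w_def)
next
  fix w assume "\<exists>x y. (\<forall>k. 0 < x$k) \<and> (\<forall>k. 0 < y$k) \<and> B n *v x = rho_max *s x \<and>
      transpose (B n) *v y = rho_max *s y \<and> y \<bullet> x = 1 \<and> w = (\<chi> k. y$k * x$k)"
  then obtain x y where x: "\<forall>k. 0 < x$k" "B n *v x = rho_max *s x"
    and y: "\<forall>k. 0 < y$k" "transpose (B n) *v y = rho_max *s y" and yx: "y \<bullet> x = 1"
    and w: "w = (\<chi> k. y$k * x$k)" by blast
  have ppos: "\<forall>k. 0 < pbar$k" using pbar_pos by blast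
  obtain a where a: "x = a *s pbar"
    using nonneg_eigvec_proportional[OF B_nonneg B_irreducible ppos B_pbar[OF n], of x] x
    by (auto simp: less_imp_le)
  obtain b where b: "y = b *s left_vec n"
    using nonneg_eigvec_proportional[OF nonneg_transpose[OF B_nonneg] irreducible_transpose[OF B_irreducible],
        where x="left_vec n" and r=rho_max and x'=y] left_vec[OF n] y
    by (auto simp: less_imp_le)
  have "a * b = 1"
    using yx left_vec[OF n] by (simp add: a b scalar_mult_eq_scaleR algebra_simps inner_commute)
  thus "w = perron_w n" by (simp add: w a b perron_w_def vec_eq_iff algebra_simps)
qed

lemma feasible_direction:
  assumes d: "\<forall>n\<in>N0 C phat pbar. g n d \<le> 0"
  shows "eventually (\<lambda>h. pbar + h *s d \<in> power_set_Pplus C phat) (at_right 0)"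
proof -
  have pos: "eventually (\<lambda>h. \<forall>k. 0 < pbar$k + h * d$k) (at_right 0)"
  proof (rule eventually_all_finite)
    fix k
    have "((\<lambda>h. pbar$k + h * d$k) \<longlongrightarrow> pbar$k + 0 * d$k) (at_right 0)" by (intro tendsto_intros)
    thus "eventually (\<lambda>h. 0 < pbar$k + h * d$k) (at_right 0)"
      using pbar_pos by (intro order_tendstoD(1)) auto
  qed
  have feas: "eventually (\<lambda>h. \<forall>m. g m pbar + h * g m d \<le> 1) (at_right 0)"
  proof (rule eventually_all_finite)
    fix m
    show "eventually (\<lambda>h. g m pbar + h * g m d \<le> 1) (at_right 0)"
    proof (cases "g m pbar = 1")
      case True
      hence gd: "g m d \<le> 0" using d N0_eq by auto
      show ?thesis using eventually_at_right_less[of "0::real"]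
        by eventually_elim (use True gd in \<open>simp add: mult_nonneg_nonpos\<close>)
    next
      case False
      hence "g m pbar < 1" using pbar_in by (simp add: power_set_P_iff order_less_le)
      moreover have "((\<lambda>h. g m pbar + h * g m d) \<longlongrightarrow> g m pbar + 0 * g m d) (at_right 0)"
        by (intro tendsto_intros)
      ultimately have "eventually (\<lambda>h. g m pbar + h * g m d < 1) (at_right 0)"
        by (intro order_tendstoD(2)) auto
      thus ?thesis by eventually_elim simp
    qed
  qed
  show ?thesis
    using pos feas
  proof eventually_elim
    case (elim h)
    have "\<forall>k. 0 < (pbar + h *s d)$k" using elim(1) by simp
    moreover have "\<forall>m. g m (pbar + h *s d) \<le> 1" using elim(2) by (simp add: g_add g_scale)
    ultimately show ?case by (simp add: power_set_Pplus_def power_set_P_iff less_imp_le)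
  qed
qed

lemma SIR_direction_deriv:
  "((\<lambda>h. SIR V z (pbar + h *s d) k / gamma$k) has_real_derivative
      (rho_max * d$k - gamma$k * (V *v d)$k) / (rho_max\<^sup>2 * pbar$k)) (at 0)"
proof -
  define D0 where "D0 = (V *v pbar)$k + z$k"
  have D0: "gamma$k * D0 = rho_max * pbar$k" using pbar_required by (simp add: required_power_def D0_def)
  have gk: "0 < gamma$k" using gamma_pos by blast
  have "0 < required_power pbar k" using pbar_pos by (simp add: required_power_pos less_imp_le)
  hence "0 < D0" using gk by (simp add: D0_def required_power_def zero_less_mult_iff)
  hence pos: "0 < D0" "0 < gamma$k" "0 < pbar$k" "0 < rho_max"
    using gk pbar_pos rho_max_pos by auto
  have eq: "(\<lambda>h. SIR V z (pbar + h *s d) k / gamma$k)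
      = (\<lambda>h. (pbar$k + h * d$k) / (D0 + h * (V *v d)$k) / gamma$k)"
    by (simp add: fun_eq_iff SIR_def D0_def matrix_vector_right_distrib vec.scale algebra_simps)
  have "((\<lambda>h. (pbar$k + h * d$k) / (D0 + h * (V *v d)$k) / gamma$k) has_real_derivative
      ((d$k * D0 - pbar$k * (V *v d)$k) / (D0 * D0) / gamma$k)) (at 0)"
    using pos by (auto intro!: derivative_eq_intros) (simp add: field_simps)
  moreover have "(d$k * D0 - pbar$k * (V *v d)$k) / (D0 * D0) / gamma$k
      = (rho_max * d$k - gamma$k * (V *v d)$k) / (rho_max\<^sup>2 * pbar$k)"
  proof -
    have "D0 = rho_max * pbar$k / gamma$k" using D0 pos by (simp add: field_simps)
    thus ?thesis using pos by (simp add: field_simps power2_eq_square)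
  qed
  ultimately show ?thesis unfolding eq by simp
qed

text \<open>The dual operator \<open>L q = \<rho>\<^sub>m\<^sub>a\<^sub>x q - (\<Gamma> V)\<^sup>T q\<close>.  It is injective because
  \<open>\<Gamma> V pbar = \<rho>\<^sub>m\<^sub>a\<^sub>x pbar - \<Gamma> z < \<rho>\<^sub>m\<^sub>a\<^sub>x pbar\<close>, and it maps each left Perron vector \<open>y\<^sup>(\<^sup>n\<^sup>)\<close>
  to a positive multiple of the constraint row \<open>c\<^sub>n\<close>.\<close>

definition gain_mat :: "real^'k^'k" where
  "gain_mat = (\<chi> i j. gamma$i * V$i$j)"

definition dual_mat :: "real^'k^'k" where
  "dual_mat = rho_max *\<^sub>R mat 1 - transpose gain_mat"

lemma dual_mat_mult: "dual_mat *v q = rho_max *s q - transpose gain_mat *v q"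
  by (simp add: dual_mat_def matrix_vector_mult_diff_rdistrib scaleR_matrix_vector_assoc[symmetric]
      scalar_mult_eq_scaleR)

lemma dual_mat_injective: assumes "dual_mat *v q = 0" shows "q = 0"
proof (rule subinvariant_no_left_eigvec)
  show "\<forall>i j. 0 \<le> gain_mat$i$j" using gamma_pos V_nonneg by (simp add: gain_mat_def less_imp_le)
  show "\<forall>i. 0 < pbar$i" using pbar_pos by blast
  show "\<forall>i. (gain_mat *v pbar)$i < rho_max * pbar$i"
  proof
    fix i
    have "(gain_mat *v pbar)$i = required_power pbar i - gamma$i * z$i"
      by (simp add: gain_mat_def mv_nth required_power_def sum_distrib_left mult_ac algebra_simps)
    thus "(gain_mat *v pbar)$i < rho_max * pbar$i"
      using pbar_required[of i] gamma_pos z_pos by simp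
  qed
  show "transpose gain_mat *v q = rho_max *s q" using assms by (simp add: dual_mat_mult)
qed

text \<open>The factor \<open>\<sigma>\<^sub>n = (\<Sum>\<^sub>i \<gamma>\<^sub>i z\<^sub>i y\<^sup>(\<^sup>n\<^sup>)\<^sub>i) / P\<^sub>n > 0\<close> with \<open>L y\<^sup>(\<^sup>n\<^sup>) = \<sigma>\<^sub>n c\<^sub>n\<close>: the rank-one part of
  \<open>B\<^sup>(\<^sup>n\<^sup>)\<close> is what distinguishes its transpose from \<open>(\<Gamma> V)\<^sup>T\<close>.\<close>

definition tight_scale :: "'n \<Rightarrow> real" where
  "tight_scale n = (\<Sum>i\<in>UNIV. gamma$i * z$i * left_vec n$i) / phat$n"

lemma tight_scale_pos: assumes "n \<in> N0 C phat pbar" shows "0 < tight_scale n"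
proof -
  obtain i :: 'k where True by simp
  have nn: "\<forall>i. 0 < gamma$i * z$i * left_vec n$i" using gamma_pos z_pos left_vec[OF assms] by simp
  have "0 < gamma$i * z$i * left_vec n$i" using nn by blast
  also have "\<dots> \<le> (\<Sum>i\<in>UNIV. gamma$i * z$i * left_vec n$i)"
    by (rule member_le_sum) (use nn in \<open>auto simp: less_imp_le\<close>)
  finally show ?thesis using phat_pos by (simp add: tight_scale_def)
qed

lemma dual_mat_left_vec:
  assumes n: "n \<in> N0 C phat pbar"
  shows "dual_mat *v left_vec n = tight_scale n *s C$n"
proof -
  have "(transpose (B n) *v y)$j = (transpose gain_mat *v y)$j + (\<Sum>i\<in>UNIV. gamma$i * z$i * y$i) / phat$n * C$n$j"
    for y :: "real^'k" and j
  proof -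
    have "(transpose (B n) *v y)$j
        = (\<Sum>i\<in>UNIV. gamma$i * V$i$j * y$i + (gamma$i * z$i * y$i) / phat$n * C$n$j)"
      unfolding tmv_nth by (intro sum.cong refl) (simp add: Bmat_def algebra_simps)
    also have "\<dots> = (\<Sum>i\<in>UNIV. gamma$i * V$i$j * y$i) + (\<Sum>i\<in>UNIV. gamma$i * z$i * y$i) / phat$n * C$n$j"
      by (simp add: sum.distrib sum_distrib_right sum_divide_distrib)
    finally show ?thesis unfolding tmv_nth by (simp add: gain_mat_def)
  qed
  hence "transpose (B n) *v left_vec n = transpose gain_mat *v left_vec n + tight_scale n *s C$n"
    by (simp add: vec_eq_iff tight_scale_def)
  hence "transpose gain_mat *v left_vec n + tight_scale n *s C$n = rho_max *s left_vec n"
    using left_vec[OF n] by simp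
  thus ?thesis unfolding dual_mat_mult by (metis add_diff_cancel_left')
qed

lemma dual_mat_pairing:
  "(dual_mat *v u) \<bullet> d = (\<Sum>k\<in>UNIV. u$k * (rho_max * d$k - gamma$k * (V *v d)$k))"
proof -
  have "(transpose gain_mat *v u) \<bullet> d = (\<Sum>j\<in>UNIV. \<Sum>k\<in>UNIV. gamma$k * V$k$j * u$k * d$j)"
    unfolding inner_real_vec tmv_nth by (simp add: gain_mat_def sum_distrib_right)
  also have "\<dots> = (\<Sum>k\<in>UNIV. u$k * (gamma$k * (V *v d)$k))"
    by (subst sum.swap) (simp add: mv_nth sum_distrib_left mult_ac)
  finally have "(transpose gain_mat *v u) \<bullet> d = (\<Sum>k\<in>UNIV. u$k * (gamma$k * (V *v d)$k))" .
  thus ?thesis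
    by (simp add: dual_mat_mult inner_diff_left inner_real_vec right_diff_distrib sum_subtractf
        sum_distrib_left mult_ac)
qed

end

section \<open>The saddle-point characterisation\<close>

locale game = maxmin_optimum C phat V z gamma pbar
  for C :: "real^'k^'n" and phat V z gamma and pbar :: "real^'k" +
  fixes \<phi> :: "real \<Rightarrow> real"
  assumes phi_diff: "\<forall>x>0. \<exists>D. (\<phi> has_real_derivative D) (at x)"
    and phi_mono: "strict_mono_on {0<..} \<phi>"
    and phi_logconvex: "convex_on (\<phi> ` {0<..}) (\<lambda>q. ln (the_inv_into {0<..} \<phi> q))"
begin

abbreviation G :: "real^'k \<Rightarrow> real^'k \<Rightarrow> real" where "G \<equiv> Gfun \<phi> gamma V z"

text \<open>By the
  Friedland--Karlin inequality \<open>ln \<rho>\<^sub>m\<^sub>a\<^sub>x \<le> \<Sum> w\<^sup>(\<^sup>n\<^sup>)\<^sub>k ln ((B\<^sup>(\<^sup>n\<^sup>) p)\<^sub>k / p\<^sub>k)\<close>, and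
  \<open>(B\<^sup>(\<^sup>n\<^sup>) p)\<^sub>k / p\<^sub>k \<le> \<gamma>\<^sub>k / SIR\<^sub>k(p)\<close> for feasible \<open>p\<close>; Jensen's inequality for \<open>\<psi>\<close>
  concludes.\<close>

lemma G_perron_w:
  assumes n: "n \<in> N0 C phat pbar" and p: "p \<in> power_set_Pplus C phat"
  shows "psi \<phi> rho_max \<le> G (perron_w n) p"
proof -
  have ppos: "\<forall>i. 0 < p$i" and pP: "p \<in> power_set_P C phat"
    using p by (auto simp: power_set_Pplus_def)
  have pnn: "\<forall>j. 0 \<le> p$j" using ppos by (simp add: less_imp_le)
  define a where "a k = gamma$k / SIR V z p k" for k
  have a_eq: "a k = required_power p k / p$k" for k by (simp add: a_def gamma_div_SIR[OF pnn])
  have apos: "\<forall>k. 0 < a k" using required_power_pos[OF pnn] ppos by (simp add: a_eq)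
  have Bpos: "0 < (B n *v p)$k" for k by (rule irreducible_mult_pos[OF B_nonneg B_irreducible ppos])
  have ratio_le: "(B n *v p)$k / p$k \<le> a k" for k
    using B_le_required[of n p k] pP ppos[rule_format, of k]
    by (simp add: a_eq power_set_P_iff divide_right_mono)
  have y: "\<forall>i. 0 < left_vec n$i" "transpose (B n) *v left_vec n = rho_max *s left_vec n"
    using left_vec[OF n] by auto
  have w: "\<forall>k. 0 \<le> perron_w n$k" "(\<Sum>k\<in>UNIV. perron_w n$k) = 1"
    using perron_w_simplex[OF n] by (auto simp: simplex_plus_def less_imp_le)
  have "ln rho_max \<le> (\<Sum>k\<in>UNIV. perron_w n$k * ln ((B n *v p)$k / p$k))"
    using friedland_karlin[OF B_nonneg _ y(1) B_pbar[OF n] y(2) rho_max_pos ppos] pbar_pos w(2)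
    by (simp add: perron_w_def)
  also have "\<dots> \<le> (\<Sum>k\<in>UNIV. perron_w n$k * ln (a k))"
    using w(1) ratio_le Bpos ppos apos by (intro sum_mono mult_left_mono) auto
  finally have "psi \<phi> rho_max \<le> (\<Sum>k\<in>UNIV. perron_w n$k * psi \<phi> (a k))"
    using jensen_psi[OF phi_mono phi_logconvex w _ rho_max_pos] apos by blast
  thus ?thesis by (simp add: Gfun_def a_def)
qed

text \<open>The guarantee extends to the convex hull \<open>\<W>\<close> of the Perron weights, since
  \<open>G(\<cdot>, p)\<close> is linear.\<close>

lemma G_convex_hull:
  assumes w: "w \<in> convex hull (perron_w ` N0 C phat pbar)" and p: "p \<in> power_set_Pplus C phat"
  shows "psi \<phi> rho_max \<le> G w p"
proof -
  define b :: "real^'k" where "b = (\<chi> k. psi \<phi> (gamma$k / SIR V z p k))"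
  have Gb: "G x p = b \<bullet> x" for x by (simp add: Gfun_def b_def inner_real_vec mult.commute)
  have "perron_w ` N0 C phat pbar \<subseteq> {x. psi \<phi> rho_max \<le> b \<bullet> x}"
    using G_perron_w[OF _ p] by (auto simp: Gb)
  hence "convex hull (perron_w ` N0 C phat pbar) \<subseteq> {x. psi \<phi> rho_max \<le> b \<bullet> x}"
    by (rule hull_minimal) (rule convex_halfspace_ge)
  thus ?thesis using w by (auto simp: Gb)
qed

text \<open>Necessity of \<open>p = pbar\<close>: at a saddle point \<open>G(\<cdot>, p) \<le> G(w, p) \<le> G(w, pbar) = \<psi>(\<rho>\<^sub>m\<^sub>a\<^sub>x)\<close>
  on the open simplex, which bounds each coefficient \<open>\<psi>(\<gamma>\<^sub>k / SIR\<^sub>k(p))\<close>; hence the required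
  powers are at most \<open>\<rho>\<^sub>m\<^sub>a\<^sub>x p\<close>, which characterises \<open>pbar\<close>.\<close>

lemma saddle_power:
  assumes w: "w \<in> simplex_plus" and p: "p \<in> power_set_Pplus C phat"
    and max_w: "\<forall>w'\<in>simplex_plus. G w' p \<le> G w p"
    and min_p: "\<forall>p'\<in>power_set_Pplus C phat. G w p \<le> G w p'"
  shows "p = pbar"
proof -
  have ppos: "\<forall>i. 0 < p$i" and pP: "p \<in> power_set_P C phat"
    using p by (auto simp: power_set_Pplus_def)
  have pnn: "\<forall>j. 0 \<le> p$j" using ppos by (simp add: less_imp_le)
  have "G w p \<le> psi \<phi> rho_max" using min_p pbar_Pplus G_pbar[OF w] by metis
  hence "\<forall>w'\<in>simplex_plus. (\<Sum>k\<in>UNIV. w'$k * psi \<phi> (gamma$k / SIR V z p k)) \<le> psi \<phi> rho_max"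
    using max_w unfolding Gfun_def by force
  hence coeff: "psi \<phi> (gamma$k / SIR V z p k) \<le> psi \<phi> rho_max" for k
    by (rule simplex_bound_coefficient)
  have "required_power p k \<le> rho_max * p$k" for k
  proof -
    have ratio: "gamma$k / SIR V z p k = required_power p k / p$k" by (rule gamma_div_SIR[OF pnn])
    have "0 < required_power p k / p$k" using required_power_pos[OF pnn] ppos by simp
    hence "required_power p k / p$k \<le> rho_max"
      using coeff[of k] psi_strict_mono[OF phi_mono, of rho_max "required_power p k / p$k"] rho_max_pos
      unfolding ratio by force
    thus ?thesis using ppos[rule_format, of k] by (simp add: divide_le_eq)
  qed
  thus ?thesis using required_bound_imp_pbar[OF pP] by blast
qed

lemma G_direction_deriv:
  assumes D: "(\<phi> has_real_derivative D) (at (1 / rho_max))"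
  shows "((\<lambda>h. G w (pbar + h *s d)) has_real_derivative
      - (D / rho_max\<^sup>2) * (\<Sum>k\<in>UNIV. (w$k / pbar$k) * (rho_max * d$k - gamma$k * (V *v d)$k))) (at 0)"
proof -
  have "((\<lambda>h. - (w$k * \<phi> (SIR V z (pbar + h *s d) k / gamma$k))) has_real_derivative
      - (w$k * (D * ((rho_max * d$k - gamma$k * (V *v d)$k) / (rho_max\<^sup>2 * pbar$k))))) (at 0)" for k
  proof -
    have "(\<phi> has_real_derivative D) (at (SIR V z (pbar + 0 *s d) k / gamma$k))"
      using D by (simp add: SIR_pbar)
    from DERIV_chain2[OF this SIR_direction_deriv] show ?thesis
      by (intro DERIV_minus DERIV_cmult)
  qed
  hence "((\<lambda>h. G w (pbar + h *s d)) has_real_derivative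
      (\<Sum>k\<in>UNIV. - (w$k * (D * ((rho_max * d$k - gamma$k * (V *v d)$k) / (rho_max\<^sup>2 * pbar$k)))))) (at 0)"
    unfolding Gfun_eq by (rule DERIV_sum)
  moreover have "(\<Sum>k\<in>UNIV. - (w$k * (D * ((rho_max * d$k - gamma$k * (V *v d)$k) / (rho_max\<^sup>2 * pbar$k)))))
      = - (D / rho_max\<^sup>2) * (\<Sum>k\<in>UNIV. (w$k / pbar$k) * (rho_max * d$k - gamma$k * (V *v d)$k))"
    by (simp add: sum_distrib_left sum_negf[symmetric]) (simp add: field_simps)
  ultimately show ?thesis by simp
qed

text \<open>First-order optimality of \<open>pbar\<close> for \<open>G(w, \<cdot>)\<close>: along every feasible direction \<open>d\<close> the
  derivative is nonnegative; as \<open>\<phi>'(1/\<rho>\<^sub>m\<^sub>a\<^sub>x) > 0\<close>, this reads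
  \<open>L(w / pbar) \<bullet> d \<le> 0\<close> for the dual operator \<open>L\<close>.\<close>

lemma first_order_condition:
  assumes min_p: "\<forall>p\<in>power_set_Pplus C phat. G w pbar \<le> G w p"
    and d: "\<forall>n\<in>N0 C phat pbar. g n d \<le> 0"
  shows "(dual_mat *v (\<chi> k. w$k / pbar$k)) \<bullet> d \<le> 0"
proof -
  have r: "0 < 1 / rho_max" using rho_max_pos by simp
  obtain D where D: "(\<phi> has_real_derivative D) (at (1 / rho_max))" using phi_diff r by blast
  have Dpos: "0 < D" by (rule phi_deriv_pos[OF phi_mono phi_logconvex r D])
  have ev: "eventually (\<lambda>h. G w (pbar + 0 *s d) \<le> G w (pbar + h *s d)) (at_right 0)"
    using feasible_direction[OF d] by eventually_elim (use min_p in simp)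
  define S where "S = (\<Sum>k\<in>UNIV. (w$k / pbar$k) * (rho_max * d$k - gamma$k * (V *v d)$k))"
  from deriv_nonneg_at_right_min[OF G_direction_deriv[OF D] ev]
  have "0 \<le> - ((D / rho_max\<^sup>2) * S)" unfolding S_def minus_mult_left .
  moreover have "0 < D / rho_max\<^sup>2" using Dpos rho_max_pos by simp
  ultimately have "S \<le> 0" using mult_pos_pos[of "D / rho_max\<^sup>2" S] by linarith
  thus ?thesis by (simp add: S_def dual_mat_pairing)
qed

text \<open>Necessity of \<open>w \<in> \<W>\<close>, first step: if \<open>pbar\<close> minimises \<open>G(w, \<cdot>)\<close>, then by the
  first-order condition and Farkas' lemma \<open>L(w / pbar)\<close> lies in the cone spanned by the
  tight rows \<open>c\<^sub>n = L(y\<^sup>(\<^sup>n\<^sup>) / \<sigma>\<^sub>n)\<close>.  As \<open>L\<close> is linear and injective, \<open>w / pbar\<close> lies in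
  the cone spanned by the vectors \<open>y\<^sup>(\<^sup>n\<^sup>) / \<sigma>\<^sub>n\<close>.\<close>

lemma minimiser_dual_cone:
  assumes min_p: "\<forall>p\<in>power_set_Pplus C phat. G w pbar \<le> G w p"
  shows "(\<chi> k. w$k / pbar$k)
           \<in> convex_cone hull ((\<lambda>n. (1 / tight_scale n) *s left_vec n) ` N0 C phat pbar)"
proof -
  let ?N = "N0 C phat pbar"
  define u :: "real^'k" where "u = (\<chi> k. w$k / pbar$k)"
  define Y where "Y = (\<lambda>n. (1 / tight_scale n) *s left_vec n) ` ?N"
  have rows: "(\<lambda>n. C$n) ` ?N = (\<lambda>q. dual_mat *v q) ` Y"
  proof -
    have "dual_mat *v ((1 / tight_scale n) *s left_vec n) = C$n" if "n \<in> ?N" for n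
      using dual_mat_left_vec[OF that] tight_scale_pos[OF that] by (simp add: vec.scale)
    thus ?thesis unfolding Y_def image_image by (intro image_cong) auto
  qed
  have "dual_mat *v u \<in> convex_cone hull ((\<lambda>n. C$n) ` ?N)"
  proof (rule farkas_cone)
    show "\<forall>d. (\<forall>s\<in>(\<lambda>n. C$n) ` ?N. s \<bullet> d \<le> 0) \<longrightarrow> (dual_mat *v u) \<bullet> d \<le> 0"
    proof (intro allI impI)
      fix d assume "\<forall>s\<in>(\<lambda>n. C$n) ` ?N. s \<bullet> d \<le> 0"
      hence "\<forall>n\<in>?N. g n d \<le> 0" using phat_pos by (auto simp: gfun_def divide_nonpos_pos)
      thus "(dual_mat *v u) \<bullet> d \<le> 0" unfolding u_def by (rule first_order_condition[OF min_p])
    qed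
  qed simp
  also have "\<dots> = (\<lambda>q. dual_mat *v q) ` (convex_cone hull Y)"
    unfolding rows by (rule convex_cone_hull_linear_image) (rule matrix_vector_mul_linear)
  finally obtain u' where u': "u' \<in> convex_cone hull Y" "dual_mat *v u = dual_mat *v u'" by blast
  have "dual_mat *v (u - u') = 0" using u'(2) by (simp add: matrix_vector_mult_diff_distrib)
  hence "u = u'" using dual_mat_injective[of "u - u'"] by simp
  thus ?thesis using u'(1) by (simp add: u_def Y_def)
qed

text \<open>Necessity of \<open>w \<in> \<W>\<close>: multiplying by \<open>pbar\<close> coordinatewise (a linear map), \<open>w\<close> lies
  in the cone spanned by the \<open>w\<^sup>(\<^sup>n\<^sup>)\<close>; all of these have coordinate sum one, hence \<open>w\<close> is a
  convex combination of them.\<close>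

lemma minimiser_weights:
  assumes w: "w \<in> simplex_plus"
    and min_p: "\<forall>p\<in>power_set_Pplus C phat. G w pbar \<le> G w p"
  shows "w \<in> convex hull (perron_w ` N0 C phat pbar)"
proof -
  let ?N = "N0 C phat pbar"
  define Y where "Y = (\<lambda>n. (1 / tight_scale n) *s left_vec n) ` ?N"
  define scale where "scale q = (\<chi> k. pbar$k * q$k)" for q :: "real^'k"
  have lin: "linear scale" by (rule linearI) (simp_all add: scale_def vec_eq_iff algebra_simps)
  have "w = scale (\<chi> k. w$k / pbar$k)"
    using pbar_pos by (simp add: scale_def vec_eq_iff less_imp_neq[symmetric])
  hence "w \<in> scale ` (convex_cone hull Y)" using minimiser_dual_cone[OF min_p] unfolding Y_def by blast
  also have "\<dots> = convex_cone hull (scale ` Y)" by (rule convex_cone_hull_linear_image[OF lin, symmetric])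
  also have "\<dots> \<subseteq> convex_cone hull (perron_w ` ?N)"
  proof (rule hull_minimal[where S = convex_cone, OF _ convex_cone_convex_cone_hull], rule image_subsetI)
    fix q assume "q \<in> Y"
    then obtain n where n: "n \<in> ?N" and q: "q = (1 / tight_scale n) *s left_vec n"
      unfolding Y_def by blast
    have "scale q = (1 / tight_scale n) *\<^sub>R perron_w n"
      by (simp add: q scale_def perron_w_def vec_eq_iff mult_ac)
    moreover have "perron_w n \<in> convex_cone hull (perron_w ` ?N)" using n by (intro hull_inc) blast
    ultimately show "scale q \<in> convex_cone hull (perron_w ` ?N)"
      using tight_scale_pos[OF n] by (simp add: conicD[OF conic_convex_cone_hull])
  qed
  finally have cone: "w \<in> convex_cone hull (perron_w ` ?N)" .
  show ?thesis
  proof (rule convex_cone_hull_on_hyperplane[where a = "\<chi> k. 1"])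
    show "\<forall>s\<in>perron_w ` ?N. (\<chi> k. 1) \<bullet> s = 1"
      using perron_w_simplex by (auto simp: simplex_plus_def inner_real_vec)
    show "(\<chi> k. 1) \<bullet> w = 1" using w by (simp add: simplex_plus_def inner_real_vec)
  qed (rule cone)
qed

lemma saddle_point_iff:
  assumes w: "w \<in> simplex_plus" and p: "p \<in> power_set_Pplus C phat"
  shows "saddle_point G simplex_plus (power_set_Pplus C phat) w p
           \<longleftrightarrow> p = pbar \<and> w \<in> convex hull (perron_w ` N0 C phat pbar)"
proof
  assume "saddle_point G simplex_plus (power_set_Pplus C phat) w p"
  hence max_w: "\<forall>w'\<in>simplex_plus. G w' p \<le> G w p"
    and min_p: "\<forall>p'\<in>power_set_Pplus C phat. G w p \<le> G w p'"
    unfolding saddle_point_def by auto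
  have "p = pbar" by (rule saddle_power[OF w p max_w min_p])
  thus "p = pbar \<and> w \<in> convex hull (perron_w ` N0 C phat pbar)"
    using minimiser_weights[OF w] min_p by simp
next
  assume "p = pbar \<and> w \<in> convex hull (perron_w ` N0 C phat pbar)"
  thus "saddle_point G simplex_plus (power_set_Pplus C phat) w p"
    unfolding saddle_point_def using w p G_pbar G_convex_hull by auto
qed

theorem saddle_point_characterisation:
  "ereal (psi \<phi> rho_max) = (SUP w\<in>simplex_plus. INF p\<in>power_set_Pplus C phat. ereal (G w p))
   \<and> ereal (psi \<phi> rho_max) = (INF p\<in>power_set_Pplus C phat. SUP w\<in>simplex_plus. ereal (G w p))
   \<and> (\<forall>w p. w \<in> simplex_plus \<longrightarrow> p \<in> power_set_Pplus C phat \<longrightarrow>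
        (saddle_point G simplex_plus (power_set_Pplus C phat) w p
         \<longleftrightarrow> p = pbar \<and> w \<in> convex hull ((\<lambda>n. perron_weight (B n)) ` N0 C phat pbar)))"
proof -
  obtain n1 where n1: "n1 \<in> N0 C phat pbar" using N0_nonempty by blast
  note minimax = minimax_value[OF perron_w_simplex[OF n1] pbar_Pplus, where G = G and v = "psi \<phi> rho_max"]
  have "(\<lambda>n. perron_weight (B n)) ` N0 C phat pbar = perron_w ` N0 C phat pbar"
    using perron_weight_eq by (intro image_cong) auto
  thus ?thesis
    using minimax G_perron_w[OF n1] G_pbar saddle_point_iff by simp
qed

end

theorem theorem5:
  fixes C :: "real^'k^'n" and phat :: "real^'n"
    and V :: "real^'k^'k" and z gamma :: "real^'k"
    and \<phi> :: "real \<Rightarrow> real" and pbar :: "real^'k" and n0 :: 'n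
  assumes K2: "CARD('k) \<ge> 2"
    and C01: "\<forall>n k. C$n$k = 0 \<or> C$n$k = 1"
    and Ccol: "\<forall>k. \<exists>n. C$n$k = 1"
    and phat_pos: "\<forall>n. 0 < phat$n"
    and V_nonneg: "\<forall>i j. 0 \<le> V$i$j"
    and V_diag: "\<forall>k. V$k$k = 0"
    and z_pos: "\<forall>k. 0 < z$k"
    and gamma_pos: "\<forall>k. 0 < gamma$k"
    and A2_deriv: "\<exists>\<phi>'. (\<forall>x>0. (\<phi> has_real_derivative \<phi>' x) (at x)) \<and> continuous_on {0<..} \<phi>'"
    and A2_mono: "strict_mono_on {0<..} \<phi>"
    and A3: "convex_on (\<phi> ` {0<..}) (\<lambda>q. ln (the_inv_into {0<..} \<phi> q))"
    and V_irred: "irreducible_mat V"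
    and pbar_in: "pbar \<in> power_set_P C phat"
    and pbar_max: "\<forall>p\<in>power_set_P C phat.
          (MIN k. SIR V z p k / gamma$k) \<le> (MIN k. SIR V z pbar k / gamma$k)"
    and n0_max: "\<forall>n. spectral_radius (Bmat gamma V z C phat n)
                     \<le> spectral_radius (Bmat gamma V z C phat n0)"
  shows "ereal (psi \<phi> (spectral_radius (Bmat gamma V z C phat n0)))
           = (SUP w\<in>simplex_plus. INF p\<in>power_set_Pplus C phat. ereal (Gfun \<phi> gamma V z w p))
       \<and> ereal (psi \<phi> (spectral_radius (Bmat gamma V z C phat n0)))
           = (INF p\<in>power_set_Pplus C phat. SUP w\<in>simplex_plus. ereal (Gfun \<phi> gamma V z w p))
       \<and> (\<forall>w p. w \<in> simplex_plus \<longrightarrow> p \<in> power_set_Pplus C phat \<longrightarrow>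
            (saddle_point (Gfun \<phi> gamma V z) simplex_plus (power_set_Pplus C phat) w p
             \<longleftrightarrow> p = pbar \<and>
                 w \<in> convex hull ((\<lambda>n. perron_weight (Bmat gamma V z C phat n)) ` N0 C phat pbar)))"
proof -
  interpret game C phat V z gamma pbar \<phi>
  proof unfold_locales
    show "\<forall>n k. 0 \<le> C$n$k" using C01 by (metis order_refl zero_le_one)
    show "\<forall>k. \<exists>n. 0 < C$n$k" using Ccol by (metis zero_less_one)
    show "\<forall>x>0. \<exists>D. (\<phi> has_real_derivative D) (at x)" using A2_deriv by blast
  qed (use phat_pos V_nonneg V_irred z_pos gamma_pos pbar_in pbar_max A2_mono A3 in auto)
  obtain n where "spectral_radius (B n) = rho_max" using rho_max_attained by blast
  hence rho: "spectral_radius (B n0) = rho_max" using n0_max rho_le_max[of n0] by (metis order_antisym)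
  show ?thesis unfolding rho by (rule saddle_point_characterisation)
qed

end
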